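(* Let $n\ge2$ and let $Q$ be the equioriented cyclic quiver with vertex set $\mathbb Z/n\mathbb Z$ and edges $i\to i-1$. Let $\mathfrak n_Q$ be the Lie algebra of primitive elements of the Hall algebra $\mathbf H_Q$ of nilpotent representations of $Q$ over $\mathbb{F}_1$. Then $\mathfrak n_Q$ is isomorphic as a Lie algebra to $\mathfrak a_+=t\,\mathfrak{gl}_n[t]\oplus N_+\subset\widehat{\mathfrak{gl}}_n$; the isomorphism (to the opposite Lie algebra $\mathfrak n_Q^{op}$) sends the basis $\{E_{r,s}\otimes t^m\}$ of $\mathfrak a_+$ bijectively onto the basis of $\mathfrak n_Q$ given by the classes of indecomposable nilpotent representations. *)

theory Defs
  imports Complex_Main
begin

text \<open>An F_1-representation of the equioriented cyclic quiver with vertices Z/nZ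
  (encoded as 0..n-1) and arrows i -> i-1 is given by the finite set of nonzero
  elements (the pointed sets with basepoint removed), a vertex (degree) for each
  element, and the arrow maps, which are F_1-linear, i.e. partial injective maps
  (an element sent to the basepoint is encoded by None).\<close>

record qrep =
  rcar :: "nat set"
  rdeg :: "nat \<Rightarrow> nat"
  rarr :: "nat \<Rightarrow> nat option"

definition arr_step :: "qrep \<Rightarrow> nat option \<Rightarrow> nat option" where
  "arr_step R o' = Option.bind o' (rarr R)"

definition nilpotent_rep :: "qrep \<Rightarrow> bool" where
  "nilpotent_rep R \<longleftrightarrow> (\<exists>k. \<forall>x\<in>rcar R. (arr_step R ^^ k) (Some x) = None)"

definition wf_rep :: "nat \<Rightarrow> qrep \<Rightarrow> bool" where
  "wf_rep n R \<longleftrightarrow>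
     finite (rcar R) \<and>
     (\<forall>x\<in>rcar R. rdeg R x < n) \<and>
     (\<forall>x\<in>rcar R. \<forall>y. rarr R x = Some y \<longrightarrow>
          y \<in> rcar R \<and> rdeg R y = (rdeg R x + n - 1) mod n) \<and>
     (\<forall>x\<in>rcar R. \<forall>y\<in>rcar R. rarr R x \<noteq> None \<and> rarr R x = rarr R y \<longrightarrow> x = y) \<and>
     nilpotent_rep R"

definition iso_rep :: "qrep \<Rightarrow> qrep \<Rightarrow> bool" where
  "iso_rep R S \<longleftrightarrow> (\<exists>h. bij_betw h (rcar R) (rcar S) \<and>
      (\<forall>x\<in>rcar R. rdeg S (h x) = rdeg R x \<and> rarr S (h x) = map_option h (rarr R x)))"

definition cls :: "nat \<Rightarrow> qrep \<Rightarrow> qrep set" where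
  "cls n R = {S. wf_rep n S \<and> iso_rep S R}"

definition isoclasses :: "nat \<Rightarrow> qrep set set" where
  "isoclasses n = {cls n R | R. wf_rep n R}"

definition rep_of :: "qrep set \<Rightarrow> qrep" where
  "rep_of C = (SOME R. R \<in> C)"

definition zero_rep :: qrep where
  "zero_rep = \<lparr>rcar = {}, rdeg = (\<lambda>_. 0), rarr = (\<lambda>_. None)\<rparr>"

definition subreps :: "qrep \<Rightarrow> nat set set" where
  "subreps R = {A. A \<subseteq> rcar R \<and> (\<forall>x\<in>A. \<forall>y. rarr R x = Some y \<longrightarrow> y \<in> A)}"

definition restr :: "qrep \<Rightarrow> nat set \<Rightarrow> qrep" where
  "restr R A = R\<lparr>rcar := A\<rparr>"

definition quot :: "qrep \<Rightarrow> nat set \<Rightarrow> qrep" where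
  "quot R A = R\<lparr>rcar := rcar R - A,
     rarr := (\<lambda>x. case rarr R x of None \<Rightarrow> None | Some y \<Rightarrow> if y \<in> A then None else Some y)\<rparr>"

definition decomps :: "qrep \<Rightarrow> (nat set \<times> nat set) set" where
  "decomps R = {(A, B). A \<in> subreps R \<and> B \<in> subreps R \<and> A \<inter> B = {} \<and> A \<union> B = rcar R}"

definition indecomposable :: "nat \<Rightarrow> qrep \<Rightarrow> bool" where
  "indecomposable n R \<longleftrightarrow> wf_rep n R \<and> rcar R \<noteq> {} \<and>
     (\<forall>(A, B)\<in>decomps R. A = {} \<or> B = {})"

definition hall :: "nat \<Rightarrow> (qrep set \<Rightarrow> complex) set" where
  "hall n = {h. finite {C. h C \<noteq> 0} \<and> (\<forall>C. h C \<noteq> 0 \<longrightarrow> C \<in> isoclasses n)}"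

definition delta :: "qrep set \<Rightarrow> qrep set \<Rightarrow> complex" where
  "delta C = (\<lambda>D. if D = C then 1 else 0)"

definition hone :: "nat \<Rightarrow> qrep set \<Rightarrow> complex" where
  "hone n = delta (cls n zero_rep)"

text \<open>Product: [M]*[N] = sum_R #{L subrep of R. L ~ N, R/L ~ M} [R].\<close>
definition hmul :: "nat \<Rightarrow> (qrep set \<Rightarrow> complex) \<Rightarrow> (qrep set \<Rightarrow> complex) \<Rightarrow> qrep set \<Rightarrow> complex" where
  "hmul n a b = (\<lambda>C. if C \<in> isoclasses n then
      (\<Sum>A\<in>subreps (rep_of C). b (cls n (restr (rep_of C) A)) * a (cls n (quot (rep_of C) A)))
      else 0)"

text \<open>Coproduct: Delta [M] = sum over decompositions M = M' (+) M'' of [M'] (x) [M''];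
  elements of H (x) H are finitely supported functions on pairs of classes.\<close>
definition hcomul :: "nat \<Rightarrow> (qrep set \<Rightarrow> complex) \<Rightarrow> qrep set \<times> qrep set \<Rightarrow> complex" where
  "hcomul n x = (\<lambda>(C1, C2). \<Sum>C\<in>{C. x C \<noteq> 0}. x C *
      of_nat (card {(A, B) \<in> decomps (rep_of C).
                     cls n (restr (rep_of C) A) = C1 \<and> cls n (restr (rep_of C) B) = C2}))"

definition primitive :: "nat \<Rightarrow> (qrep set \<Rightarrow> complex) \<Rightarrow> bool" where
  "primitive n x \<longleftrightarrow> x \<in> hall n \<and>
     hcomul n x = (\<lambda>(C1, C2). x C1 * hone n C2 + hone n C1 * x C2)"

definition nQ :: "nat \<Rightarrow> (qrep set \<Rightarrow> complex) set" where
  "nQ n = {x. primitive n x}"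

definition hbr :: "nat \<Rightarrow> (qrep set \<Rightarrow> complex) \<Rightarrow> (qrep set \<Rightarrow> complex) \<Rightarrow> qrep set \<Rightarrow> complex" where
  "hbr n x y = (\<lambda>C. hmul n x y C - hmul n y x C)"

text \<open>An element is a finite sum sum_m A_m t^m with A_m in gl_n(C), encoded as
  x m r s = (r,s) entry of A_m (indices 0..n-1), with A_0 strictly upper triangular.
  The 2-cocycle of the central extension vanishes on nonnegative powers of t,
  so the bracket inside the affine algebra is the loop commutator.\<close>
definition aplus :: "nat \<Rightarrow> (nat \<Rightarrow> nat \<Rightarrow> nat \<Rightarrow> complex) set" where
  "aplus n = {x. finite {m. \<exists>r s. x m r s \<noteq> 0} \<and>
      (\<forall>m r s. x m r s \<noteq> 0 \<longrightarrow> r < n \<and> s < n \<and> (1 \<le> m \<or> r < s))}"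

definition abr :: "nat \<Rightarrow> (nat \<Rightarrow> nat \<Rightarrow> nat \<Rightarrow> complex) \<Rightarrow> (nat \<Rightarrow> nat \<Rightarrow> nat \<Rightarrow> complex)
                    \<Rightarrow> nat \<Rightarrow> nat \<Rightarrow> nat \<Rightarrow> complex" where
  "abr n x y = (\<lambda>m r s. \<Sum>a\<le>m. \<Sum>k<n. x a r k * y (m - a) k s - y (m - a) r k * x a k s)"

definition Ebasis :: "nat \<Rightarrow> nat \<Rightarrow> nat \<Rightarrow> nat \<Rightarrow> nat \<Rightarrow> nat \<Rightarrow> complex" where
  "Ebasis r s m = (\<lambda>m' r' s'. if m' = m \<and> r' = r \<and> s' = s then 1 else 0)"

definition aplus_basis :: "nat \<Rightarrow> (nat \<Rightarrow> nat \<Rightarrow> nat \<Rightarrow> complex) set" where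
  "aplus_basis n = {Ebasis r s m | r s m. r < n \<and> s < n \<and> (1 \<le> m \<or> r < s)}"

definition indec_basis :: "nat \<Rightarrow> (qrep set \<Rightarrow> complex) set" where
  "indec_basis n = {delta (cls n R) | R. indecomposable n R}"

end

theory Submission
  imports Defs
begin

(*
  (1) Classification.  A representation is indecomposable iff it is generated
      by one element under the arrow map, iff it is isomorphic to a "chain"
      chain n d l = (0 <- 1 <- ... <- l-1) with bottom degree d < n, l >= 1;
      the pair (d, l) is determined by the isomorphism class.
  (2) Hall algebra.  An indecomposable has only the trivial decompositions, so
      its class is primitive; conversely the coproduct of a primitive element
      cannot charge a decomposable class.  Hence n_Q is the space of finitely
      supported functions on indecomposable classes.  The product of two such
      elements evaluated on a chain is a convolution over the initial segments
      of the chain, and on a decomposable class it is symmetric, because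
      there a subrepresentation with indecomposable sub and quotient is a
      direct summand whose complement exchanges the two roles.
  (3) The map.  Sending E_{r,s} t^m to the class of chain n r (m n + s - r),
      i.e. chain n d l to E_{d, (d+l) mod n} t^{(d+l) div n}, is a linear
      bijection a_+ -> n_Q mapping bases to bases, and the convolution formula
      of (2) turns the loop commutator into the opposite Hall commutator.
*)

lemma arr_step_None [simp]: "arr_step R None = None"
  by (simp add: arr_step_def)

lemma arr_step_Some [simp]: "arr_step R (Some x) = rarr R x"
  by (simp add: arr_step_def)

lemma arr_step_iter_None [simp]: "(arr_step R ^^ k) None = None"
  by (induction k) auto

lemma arr_step_iter_Suc:
  "(arr_step R ^^ Suc k) (Some x) = Option.bind ((arr_step R ^^ k) (Some x)) (rarr R)"
  by (simp add: arr_step_def)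

lemma arr_step_iter_add:
  "(arr_step R ^^ (i + j)) (Some x) = (arr_step R ^^ i) ((arr_step R ^^ j) (Some x))"
  by (simp add: funpow_add)

lemma arr_step_iter_closed:
  assumes closed: "\<forall>x\<in>A. \<forall>y. rarr R x = Some y \<longrightarrow> y \<in> A" and "x \<in> A"
    and "(arr_step R ^^ k) (Some x) = Some z"
  shows "z \<in> A"
  using assms(3)
proof (induction k arbitrary: z)
  case 0
  then show ?case using \<open>x \<in> A\<close> by simp
next
  case (Suc k)
  then obtain w where "(arr_step R ^^ k) (Some x) = Some w" "rarr R w = Some z"
    by (cases "(arr_step R ^^ k) (Some x)") (auto simp: arr_step_iter_Suc)
  then show ?case using Suc.IH closed by blast
qed

lemma arr_step_iter_mono:
  assumes "\<And>x y. rarr Q x = Some y \<Longrightarrow> rarr R x = Some y"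
    and "(arr_step Q ^^ k) (Some x) = Some z"
  shows "(arr_step R ^^ k) (Some x) = Some z"
  using assms(2)
proof (induction k arbitrary: z)
  case 0
  then show ?case by simp
next
  case (Suc k)
  then obtain w where "(arr_step Q ^^ k) (Some x) = Some w" "rarr Q w = Some z"
    by (cases "(arr_step Q ^^ k) (Some x)") (auto simp: arr_step_iter_Suc)
  then show ?case using Suc.IH assms(1) by (simp add: arr_step_iter_Suc)
qed

lemma nilpotent_rep_mono:
  assumes "\<And>x y. rarr Q x = Some y \<Longrightarrow> rarr R x = Some y"
    and "nilpotent_rep R" and "rcar Q \<subseteq> rcar R"
  shows "nilpotent_rep Q"
proof -
  obtain k where k: "\<forall>x\<in>rcar R. (arr_step R ^^ k) (Some x) = None"
    using assms(2) unfolding nilpotent_rep_def by blast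
  have "(arr_step Q ^^ k) (Some x) = None" if "x \<in> rcar Q" for x
    using arr_step_iter_mono[OF assms(1)] k assms(3) that
    by (cases "(arr_step Q ^^ k) (Some x)") fastforce+
  then show ?thesis unfolding nilpotent_rep_def by blast
qed

lemma wf_rep_arr: "wf_rep n R \<Longrightarrow> x \<in> rcar R \<Longrightarrow> rarr R x = Some y \<Longrightarrow> y \<in> rcar R"
  unfolding wf_rep_def by blast

lemma wf_rep_arr_inj:
  "wf_rep n R \<Longrightarrow> x \<in> rcar R \<Longrightarrow> y \<in> rcar R \<Longrightarrow> rarr R x = Some z \<Longrightarrow> rarr R y = Some z \<Longrightarrow> x = y"
  unfolding wf_rep_def by (metis option.distinct(1))

lemma wf_rep_finite: "wf_rep n R \<Longrightarrow> finite (rcar R)"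
  unfolding wf_rep_def by blast

lemma wf_rep_iter_in_car:
  "wf_rep n R \<Longrightarrow> x \<in> rcar R \<Longrightarrow> (arr_step R ^^ k) (Some x) = Some z \<Longrightarrow> z \<in> rcar R"
  by (rule arr_step_iter_closed[of "rcar R" R x k z]) (auto dest: wf_rep_arr)

lemma wf_zero_rep: "wf_rep n zero_rep"
  by (simp add: wf_rep_def zero_rep_def nilpotent_rep_def)

lemma rcar_restr [simp]: "rcar (restr R A) = A"
  and rdeg_restr [simp]: "rdeg (restr R A) = rdeg R"
  and rarr_restr [simp]: "rarr (restr R A) = rarr R"
  by (simp_all add: restr_def)

lemma arr_step_restr [simp]: "arr_step (restr R A) = arr_step R"
  by (simp add: arr_step_def fun_eq_iff)

lemma restr_all [simp]: "restr R (rcar R) = R"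
  by (simp add: restr_def)

lemma rcar_quot [simp]: "rcar (quot R A) = rcar R - A"
  and rdeg_quot [simp]: "rdeg (quot R A) = rdeg R"
  by (simp_all add: quot_def)

lemma rarr_quot: "rarr (quot R A) x = Option.bind (rarr R x) (\<lambda>y. if y \<in> A then None else Some y)"
  by (simp add: quot_def split: option.split)

lemma rarr_quot_Some: "rarr (quot R A) x = Some y \<longleftrightarrow> rarr R x = Some y \<and> y \<notin> A"
  by (auto simp: rarr_quot bind_eq_Some_conv)

lemma subreps_empty: "{} \<in> subreps R"
  by (simp add: subreps_def)

lemma subreps_all: "wf_rep n R \<Longrightarrow> rcar R \<in> subreps R"
  by (auto simp: subreps_def dest: wf_rep_arr)

lemma finite_subreps: "wf_rep n R \<Longrightarrow> finite (subreps R)"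
  by (rule finite_subset[of _ "Pow (rcar R)"]) (auto simp: subreps_def wf_rep_finite)

lemma finite_decomps: "wf_rep n R \<Longrightarrow> finite (decomps R)"
  by (rule finite_subset[of _ "Pow (rcar R) \<times> Pow (rcar R)"])
     (auto simp: decomps_def subreps_def wf_rep_finite)

lemma wf_restr:
  assumes "wf_rep n R" "A \<in> subreps R"
  shows "wf_rep n (restr R A)"
proof -
  have A: "A \<subseteq> rcar R" "\<forall>x\<in>A. \<forall>y. rarr R x = Some y \<longrightarrow> y \<in> A"
    using assms(2) by (auto simp: subreps_def)
  have "nilpotent_rep (restr R A)"
    by (rule nilpotent_rep_mono[of _ R]) (use assms(1) A in \<open>auto simp: wf_rep_def\<close>)
  moreover have "finite A"
    using assms(1) A(1) finite_subset unfolding wf_rep_def by blast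
  moreover have "\<forall>x\<in>A. rdeg R x < n"
    and "\<forall>x\<in>A. \<forall>y. rarr R x = Some y \<longrightarrow> y \<in> A \<and> rdeg R y = (rdeg R x + n - 1) mod n"
    and "\<forall>x\<in>A. \<forall>y\<in>A. rarr R x \<noteq> None \<and> rarr R x = rarr R y \<longrightarrow> x = y"
    using assms(1) A unfolding wf_rep_def by blast+
  ultimately show ?thesis
    unfolding wf_rep_def rcar_restr rdeg_restr rarr_restr by (intro conjI)
qed

lemma wf_quot:
  assumes "wf_rep n R" "A \<in> subreps R"
  shows "wf_rep n (quot R A)"
proof -
  have "nilpotent_rep (quot R A)"
    by (rule nilpotent_rep_mono[of _ R]) (use assms(1) in \<open>auto simp: wf_rep_def rarr_quot_Some\<close>)
  moreover have "\<forall>x\<in>rcar R - A. \<forall>y\<in>rcar R - A.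
      rarr (quot R A) x \<noteq> None \<and> rarr (quot R A) x = rarr (quot R A) y \<longrightarrow> x = y"
  proof (intro ballI impI)
    fix x y
    assume xy: "x \<in> rcar R - A" "y \<in> rcar R - A"
      "rarr (quot R A) x \<noteq> None \<and> rarr (quot R A) x = rarr (quot R A) y"
    then obtain z where "rarr (quot R A) x = Some z" "rarr (quot R A) y = Some z"
      by (metis option.exhaust)
    then show "x = y"
      using wf_rep_arr_inj[OF assms(1)] xy(1,2) by (auto simp: rarr_quot_Some)
  qed
  moreover have "finite (rcar R - A)" and "\<forall>x\<in>rcar R - A. rdeg R x < n"
    and "\<forall>x\<in>rcar R - A. \<forall>y. rarr (quot R A) x = Some y \<longrightarrow>
      y \<in> rcar R - A \<and> rdeg R y = (rdeg R x + n - 1) mod n"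
    using assms(1) unfolding wf_rep_def rarr_quot_Some by blast+
  ultimately show ?thesis
    unfolding wf_rep_def rcar_quot rdeg_quot by (intro conjI)
qed

definition iso_map :: "qrep \<Rightarrow> qrep \<Rightarrow> (nat \<Rightarrow> nat) \<Rightarrow> bool" where
  "iso_map R S h \<longleftrightarrow> bij_betw h (rcar R) (rcar S) \<and>
     (\<forall>x\<in>rcar R. rdeg S (h x) = rdeg R x \<and> rarr S (h x) = map_option h (rarr R x))"

lemma iso_rep_iff_iso_map: "iso_rep R S \<longleftrightarrow> (\<exists>h. iso_map R S h)"
  by (simp add: iso_rep_def iso_map_def)

lemma iso_map_id: "iso_map R R id"
  by (simp add: iso_map_def option.map_id)

lemma iso_map_comp: "iso_map R S h \<Longrightarrow> iso_map S T g \<Longrightarrow> iso_map R T (g \<circ> h)"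
  unfolding iso_map_def
  by (auto simp: option.map_comp intro: bij_betw_trans dest: bij_betw_apply)

lemma iso_map_inv:
  assumes wf: "wf_rep n R" and h: "iso_map R S h"
  shows "iso_map S R (inv_into (rcar R) h)"
proof -
  let ?g = "inv_into (rcar R) h"
  have bij: "bij_betw h (rcar R) (rcar S)"
    and hp: "\<And>x. x \<in> rcar R \<Longrightarrow> rdeg S (h x) = rdeg R x \<and> rarr S (h x) = map_option h (rarr R x)"
    using h by (auto simp: iso_map_def)
  have g: "bij_betw ?g (rcar S) (rcar R)" using bij by (rule bij_betw_inv_into)
  have gh: "?g (h x) = x" if "x \<in> rcar R" for x using bij that by (simp add: bij_betw_def)
  have hg: "h (?g y) = y" if "y \<in> rcar S" for y using bij that by (simp add: bij_betw_def f_inv_into_f)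
  have "rdeg R (?g y) = rdeg S y \<and> rarr R (?g y) = map_option ?g (rarr S y)" if y: "y \<in> rcar S" for y
  proof -
    have gy: "?g y \<in> rcar R" using bij_betw_apply[OF g y] .
    have arr: "rarr S y = map_option h (rarr R (?g y))" using hp[OF gy] hg[OF y] by simp
    have "map_option ?g (map_option h (rarr R (?g y))) = rarr R (?g y)"
      using gh wf_rep_arr[OF wf gy] by (cases "rarr R (?g y)") auto
    then show ?thesis using hp[OF gy] hg[OF y] arr by simp
  qed
  then show ?thesis using g by (simp add: iso_map_def)
qed

lemma iso_refl: "iso_rep R R"
  using iso_map_id by (auto simp: iso_rep_iff_iso_map)

lemma iso_sym: "wf_rep n R \<Longrightarrow> iso_rep R S \<Longrightarrow> iso_rep S R"
  using iso_map_inv unfolding iso_rep_iff_iso_map by blast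

lemma iso_trans: "iso_rep R S \<Longrightarrow> iso_rep S T \<Longrightarrow> iso_rep R T"
  using iso_map_comp unfolding iso_rep_iff_iso_map by blast

lemma iso_map_iter:
  assumes wf: "wf_rep n R" and h: "iso_map R S h" and x: "x \<in> rcar R"
    and "(arr_step R ^^ k) (Some x) = Some z"
  shows "(arr_step S ^^ k) (Some (h x)) = Some (h z)"
  using assms(4)
proof (induction k arbitrary: z)
  case 0
  then show ?case by simp
next
  case (Suc k)
  then obtain w where w: "(arr_step R ^^ k) (Some x) = Some w" "rarr R w = Some z"
    by (cases "(arr_step R ^^ k) (Some x)") (auto simp: arr_step_iter_Suc)
  have "rarr S (h w) = Some (h z)"
    using h wf_rep_iter_in_car[OF wf x w(1)] w(2) by (simp add: iso_map_def)
  then show ?case using Suc.IH[OF w(1)] by (simp add: arr_step_iter_Suc)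
qed

lemma iso_map_subreps:
  assumes h: "iso_map R S h" and A: "A \<in> subreps R"
  shows "h ` A \<in> subreps S"
proof -
  have AR: "A \<subseteq> rcar R" and cl: "\<forall>x\<in>A. \<forall>y. rarr R x = Some y \<longrightarrow> y \<in> A"
    using A by (auto simp: subreps_def)
  have "z \<in> h ` A" if x: "x \<in> A" and xz: "rarr S (h x) = Some z" for x z
  proof -
    have "rarr S (h x) = map_option h (rarr R x)" using h AR x by (auto simp: iso_map_def)
    then obtain w where "rarr R x = Some w" "z = h w" using xz by (cases "rarr R x") auto
    then show ?thesis using cl x by blast
  qed
  moreover have "h ` A \<subseteq> rcar S" using h AR by (auto simp: iso_map_def bij_betw_def)
  ultimately show ?thesis by (auto simp: subreps_def)
qed

lemma iso_map_restr:
  assumes h: "iso_map R S h" and AR: "A \<subseteq> rcar R"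
  shows "iso_map (restr R A) (restr S (h ` A)) h"
  using h bij_betw_subset[OF _ AR refl] AR by (auto simp: iso_map_def)

lemma iso_map_quot:
  assumes wf: "wf_rep n R" and h: "iso_map R S h" and AR: "A \<subseteq> rcar R"
  shows "iso_map (quot R A) (quot S (h ` A)) h"
proof -
  have bij: "bij_betw h (rcar R) (rcar S)"
    and hp: "\<And>x. x \<in> rcar R \<Longrightarrow> rdeg S (h x) = rdeg R x \<and> rarr S (h x) = map_option h (rarr R x)"
    using h by (auto simp: iso_map_def)
  have inj: "inj_on h (rcar R)" using bij by (simp add: bij_betw_def)
  have "h ` (rcar R - A) = rcar S - h ` A"
    using inj_on_image_set_diff[OF inj Diff_subset AR] bij by (simp add: bij_betw_def)
  then have "bij_betw h (rcar R - A) (rcar S - h ` A)"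
    using bij_betw_subset[OF bij Diff_subset, of A] by simp
  moreover have "rarr (quot S (h ` A)) (h x) = map_option h (rarr (quot R A) x)" if x: "x \<in> rcar R" for x
  proof (cases "rarr R x")
    case None
    then show ?thesis using hp[OF x] by (simp add: rarr_quot)
  next
    case (Some w)
    have "h w \<in> h ` A \<longleftrightarrow> w \<in> A"
      using inj_on_image_mem_iff[OF inj wf_rep_arr[OF wf x Some] AR] .
    then show ?thesis using hp[OF x] Some by (simp add: rarr_quot)
  qed
  ultimately show ?thesis using hp by (simp add: iso_map_def)
qed

lemma cls_eq:
  assumes "wf_rep n R" "wf_rep n S"
  shows "cls n R = cls n S \<longleftrightarrow> iso_rep R S"
proof
  assume "cls n R = cls n S"
  moreover have "R \<in> cls n R" using assms iso_refl by (simp add: cls_def)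
  ultimately show "iso_rep R S" by (simp add: cls_def)
next
  assume "iso_rep R S"
  then show "cls n R = cls n S"
    unfolding cls_def using iso_sym[OF assms(1)] iso_trans by blast
qed

lemma cls_in_isoclasses: "wf_rep n R \<Longrightarrow> cls n R \<in> isoclasses n"
  unfolding isoclasses_def by blast

lemma rep_of_cls:
  assumes "C \<in> isoclasses n"
  shows "wf_rep n (rep_of C)" "C = cls n (rep_of C)"
proof -
  obtain R where R: "wf_rep n R" "C = cls n R" using assms unfolding isoclasses_def by blast
  then have "R \<in> C" by (simp add: cls_def iso_refl)
  then have in_C: "rep_of C \<in> C" unfolding rep_of_def by (rule someI)
  then show wf: "wf_rep n (rep_of C)" using R by (simp add: cls_def)
  have "iso_rep (rep_of C) R" using in_C R by (simp add: cls_def)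
  then show "C = cls n (rep_of C)" using cls_eq[OF wf R(1)] R by simp
qed

lemma cls_zero_iff:
  assumes "wf_rep n R"
  shows "cls n R = cls n zero_rep \<longleftrightarrow> rcar R = {}"
proof -
  have "cls n R = cls n zero_rep \<longleftrightarrow> iso_rep R zero_rep" using cls_eq[OF assms wf_zero_rep] .
  also have "\<dots> \<longleftrightarrow> rcar R = {}" unfolding iso_rep_def zero_rep_def by (auto simp: bij_betw_def)
  finally show ?thesis .
qed

lemma sum_subreps_iso:
  assumes wR: "wf_rep n R" and wS: "wf_rep n S" and iso: "iso_rep R S"
  shows "(\<Sum>A\<in>subreps R. F (cls n (restr R A)) (cls n (quot R A)))
       = (\<Sum>A\<in>subreps S. F (cls n (restr S A)) (cls n (quot S A)))"
proof -
  obtain h where h: "iso_map R S h" using iso by (auto simp: iso_rep_iff_iso_map)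
  define g where "g = inv_into (rcar R) h"
  have g: "iso_map S R g" using iso_map_inv[OF wR h] by (simp add: g_def)
  have inj: "inj_on h (rcar R)" and img: "h ` rcar R = rcar S"
    using h by (auto simp: iso_map_def bij_betw_def)
  have "bij_betw (image h) (subreps R) (subreps S)"
  proof (rule bij_betw_byWitness[where f' = "image g"])
    show "\<forall>A\<in>subreps R. g ` h ` A = A"
      using inj by (auto simp: g_def subreps_def image_image subset_iff inv_into_f_f)
    show "\<forall>A\<in>subreps S. h ` g ` A = A"
      using img by (auto simp: g_def subreps_def image_image subset_iff f_inv_into_f)
  qed (use iso_map_subreps[OF h] iso_map_subreps[OF g] in blast)+
  moreover have "F (cls n (restr S (h ` A))) (cls n (quot S (h ` A)))
      = F (cls n (restr R A)) (cls n (quot R A))" if A: "A \<in> subreps R" for A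
  proof -
    have AR: "A \<subseteq> rcar R" using A by (simp add: subreps_def)
    have hA: "h ` A \<in> subreps S" using iso_map_subreps[OF h A] .
    have "cls n (restr R A) = cls n (restr S (h ` A))"
      using iso_map_restr[OF h AR] cls_eq[OF wf_restr[OF wR A] wf_restr[OF wS hA]]
      by (auto simp: iso_rep_iff_iso_map)
    moreover have "cls n (quot R A) = cls n (quot S (h ` A))"
      using iso_map_quot[OF wR h AR] cls_eq[OF wf_quot[OF wR A] wf_quot[OF wS hA]]
      by (auto simp: iso_rep_iff_iso_map)
    ultimately show ?thesis by simp
  qed
  ultimately show ?thesis by (simp add: sum.reindex_bij_betw[symmetric])
qed

section \<open>Chains: the indecomposable representations\<close>

definition chain :: "nat \<Rightarrow> nat \<Rightarrow> nat \<Rightarrow> qrep" where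
  "chain n d l = \<lparr>rcar = {..<l}, rdeg = (\<lambda>j. (d + j) mod n),
     rarr = (\<lambda>j. if j = 0 then None else Some (j - 1))\<rparr>"

lemma rcar_chain [simp]: "rcar (chain n d l) = {..<l}"
  and rdeg_chain [simp]: "rdeg (chain n d l) j = (d + j) mod n"
  and rarr_chain [simp]: "rarr (chain n d l) j = (if j = 0 then None else Some (j - 1))"
  by (simp_all add: chain_def)

lemma chain_iter: "(arr_step (chain n d l) ^^ k) (Some j) = (if k \<le> j then Some (j - k) else None)"
  by (induction k) auto

lemma mod_pred:
  assumes "(n::nat) \<ge> 1" "X \<ge> 1"
  shows "(X - 1) mod n = (X mod n + n - 1) mod n"
proof -
  have "(X mod n + n - 1) mod n = (X mod n + (n - 1)) mod n" using assms by simp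
  also have "\<dots> = (X + (n - 1)) mod n" by (simp add: mod_add_left_eq)
  also have "X + (n - 1) = (X - 1) + n" using assms by simp
  finally show ?thesis by simp
qed

lemma mod_pred_succ: "(D::nat) < n \<Longrightarrow> D = ((D + n - 1) mod n + 1) mod n"
  by (cases D) (simp_all add: mod_if)

lemma wf_chain:
  assumes n: "n \<ge> 1"
  shows "wf_rep n (chain n d l)"
  unfolding wf_rep_def nilpotent_rep_def
proof (intro conjI)
  show "\<forall>x\<in>rcar (chain n d l). \<forall>y. rarr (chain n d l) x = Some y \<longrightarrow>
        y \<in> rcar (chain n d l) \<and> rdeg (chain n d l) y = (rdeg (chain n d l) x + n - 1) mod n"
    using mod_pred[OF n, of "d + _"] by auto
  show "\<exists>k. \<forall>x\<in>rcar (chain n d l). (arr_step (chain n d l) ^^ k) (Some x) = None"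
    by (rule exI[of _ l]) (auto simp: chain_iter)
qed (use n in auto)

lemma restr_chain: "restr (chain n d l) {..<p} = chain n d p"
  by (simp add: restr_def chain_def)

definition generated_by :: "qrep \<Rightarrow> nat \<Rightarrow> bool" where
  "generated_by R t \<longleftrightarrow> t \<in> rcar R \<and> (\<forall>z\<in>rcar R. \<exists>k. (arr_step R ^^ k) (Some t) = Some z)"

lemma chain_generated: "1 \<le> l \<Longrightarrow> generated_by (chain n d l) (l - 1)"
  unfolding generated_by_def
proof (intro conjI ballI)
  fix z assume "z \<in> rcar (chain n d l)"
  then have "(arr_step (chain n d l) ^^ (l - 1 - z)) (Some (l - 1)) = Some z"
    by (simp add: chain_iter)
  then show "\<exists>k. (arr_step (chain n d l) ^^ k) (Some (l - 1)) = Some z" by blast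
qed simp

text \<open>A generated representation is indecomposable: the summand containing the
  generator contains everything.\<close>
lemma generated_indecomposable:
  assumes wf: "wf_rep n R" and gen: "generated_by R t"
  shows "indecomposable n R"
  unfolding indecomposable_def
proof (intro conjI)
  have t: "t \<in> rcar R" using gen by (simp add: generated_by_def)
  then show "rcar R \<noteq> {}" by blast
  have all: "rcar R \<subseteq> X" if X: "X \<in> subreps R" "t \<in> X" for X
  proof
    fix z assume "z \<in> rcar R"
    then obtain k where "(arr_step R ^^ k) (Some t) = Some z"
      using gen by (auto simp: generated_by_def)
    then show "z \<in> X" using arr_step_iter_closed[of X R t k z] X by (auto simp: subreps_def)
  qed
  show "\<forall>(A, B)\<in>decomps R. A = {} \<or> B = {}"
  proof clarify
    fix A B assume AB: "(A, B) \<in> decomps R" and "B \<noteq> {}"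
    then have "A \<in> subreps R" "B \<in> subreps R" "A \<inter> B = {}" "A \<union> B = rcar R"
      by (auto simp: decomps_def)
    then show "A = {}" using all t \<open>B \<noteq> {}\<close> by blast
  qed
qed (rule wf)

text \<open>By nilpotency, some element is not the target of any arrow.\<close>
lemma exists_top:
  assumes wf: "wf_rep n R" and ne: "rcar R \<noteq> {}"
  shows "\<exists>t\<in>rcar R. \<forall>x\<in>rcar R. rarr R x \<noteq> Some t"
proof (rule ccontr)
  assume "\<not> ?thesis"
  then have pre: "\<forall>t\<in>rcar R. \<exists>x\<in>rcar R. rarr R x = Some t" by blast
  have reach: "\<forall>t\<in>rcar R. \<exists>x\<in>rcar R. (arr_step R ^^ k) (Some x) = Some t" for k
  proof (induction k)
    case (Suc k)
    show ?case
    proof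
      fix t assume "t \<in> rcar R"
      then obtain x where x: "x \<in> rcar R" "(arr_step R ^^ k) (Some x) = Some t" using Suc by blast
      then obtain x' where x': "x' \<in> rcar R" "rarr R x' = Some x" using pre by blast
      have "(arr_step R ^^ Suc k) (Some x') = (arr_step R ^^ k) (arr_step R (Some x'))"
        by (simp only: funpow_Suc_right comp_def)
      then show "\<exists>x\<in>rcar R. (arr_step R ^^ Suc k) (Some x) = Some t"
        using x x' by auto
    qed
  qed auto
  obtain K where "\<forall>x\<in>rcar R. (arr_step R ^^ K) (Some x) = None"
    using wf by (auto simp: wf_rep_def nilpotent_rep_def)
  then show False using reach[of K] ne by fastforce
qed

definition orbit :: "qrep \<Rightarrow> nat \<Rightarrow> nat set" where
  "orbit R t = {z \<in> rcar R. \<exists>k. (arr_step R ^^ k) (Some t) = Some z}"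

lemma orbit_subreps:
  assumes wf: "wf_rep n R"
  shows "orbit R t \<in> subreps R"
  unfolding subreps_def mem_Collect_eq
proof (intro conjI ballI allI impI)
  fix x y assume "x \<in> orbit R t" "rarr R x = Some y"
  then obtain k where "(arr_step R ^^ k) (Some t) = Some x" "x \<in> rcar R" by (auto simp: orbit_def)
  then have "(arr_step R ^^ Suc k) (Some t) = Some y" "y \<in> rcar R"
    using \<open>rarr R x = Some y\<close> wf_rep_arr[OF wf] by (auto simp: arr_step_iter_Suc)
  then show "y \<in> orbit R t" unfolding orbit_def by blast
qed (auto simp: orbit_def)

text \<open>If nothing maps to t, the complement of its orbit is closed under the
  arrows too, since arrows are injective.\<close>
lemma orbit_compl_subreps:
  assumes wf: "wf_rep n R" and t: "t \<in> rcar R" and top: "\<forall>x\<in>rcar R. rarr R x \<noteq> Some t"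
  shows "rcar R - orbit R t \<in> subreps R"
  unfolding subreps_def mem_Collect_eq
proof (intro conjI ballI allI impI)
  fix x y assume x: "x \<in> rcar R - orbit R t" and xy: "rarr R x = Some y"
  have y: "y \<in> rcar R" using wf_rep_arr[OF wf _ xy] x by blast
  show "y \<in> rcar R - orbit R t"
  proof (intro DiffI y notI)
    assume "y \<in> orbit R t"
    then obtain k where k: "(arr_step R ^^ k) (Some t) = Some y" by (auto simp: orbit_def)
    show False
    proof (cases k)
      case 0
      then show False using k top x xy by auto
    next
      case (Suc k')
      then obtain w where w: "(arr_step R ^^ k') (Some t) = Some w" "rarr R w = Some y"
        using k by (cases "(arr_step R ^^ k') (Some t)") (auto simp: arr_step_iter_Suc)
      have "w \<in> rcar R" using wf_rep_iter_in_car[OF wf t w(1)] .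
      then have "w = x" using wf_rep_arr_inj[OF wf _ _ w(2) xy] x by blast
      then show False using w(1) x unfolding orbit_def by blast
    qed
  qed
qed blast

text \<open>Conversely, an indecomposable is generated by a top element t: the orbit
  of t and its complement form a decomposition, so the complement is empty.\<close>
lemma indecomposable_generated:
  assumes "indecomposable n R"
  shows "\<exists>t. generated_by R t"
proof -
  have wf: "wf_rep n R" and ne: "rcar R \<noteq> {}" and ind: "\<forall>(A, B)\<in>decomps R. A = {} \<or> B = {}"
    using assms by (auto simp: indecomposable_def)
  obtain t where t: "t \<in> rcar R" "\<forall>x\<in>rcar R. rarr R x \<noteq> Some t"
    using exists_top[OF wf ne] by blast
  have "t \<in> orbit R t" unfolding orbit_def using t(1) by (auto intro: exI[of _ 0])
  moreover have "(orbit R t, rcar R - orbit R t) \<in> decomps R"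
    using orbit_subreps[OF wf] orbit_compl_subreps[OF wf t] by (auto simp: decomps_def orbit_def)
  ultimately have "rcar R - orbit R t = {}" using ind by auto
  then have "generated_by R t" using t(1) unfolding generated_by_def orbit_def by blast
  then show ?thesis by blast
qed

text \<open>Before the orbit of t dies, its iterates are pairwise distinct: an equality
  i < j < L would let the orbit die already at step L - j + i.\<close>
lemma iterates_distinct:
  assumes dies: "(arr_step R ^^ L) (Some t) = None"
    and alive: "\<And>k. k < L \<Longrightarrow> (arr_step R ^^ k) (Some t) \<noteq> None"
    and ij: "i < j" "j < L" and eq: "(arr_step R ^^ i) (Some t) = (arr_step R ^^ j) (Some t)"
  shows False
proof -
  have "(arr_step R ^^ (L - j + i)) (Some t) = (arr_step R ^^ (L - j)) ((arr_step R ^^ j) (Some t))"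
    using eq by (simp add: arr_step_iter_add)
  also have "\<dots> = (arr_step R ^^ L) (Some t)"
    using ij arr_step_iter_add[where R = R and i = "L - j" and j = j] by simp
  finally have "(arr_step R ^^ (L - j + i)) (Some t) = None" using dies by simp
  moreover have "L - j + i < L" using ij by simp
  ultimately show False using alive by blast
qed

lemma generated_orbit:
  assumes wf: "wf_rep n R" and gen: "generated_by R t"
  obtains L :: nat and e where "1 \<le> L" "(arr_step R ^^ L) (Some t) = None"
    "\<And>k. k < L \<Longrightarrow> (arr_step R ^^ k) (Some t) = Some (e k)" "bij_betw e {..<L} (rcar R)"
proof -
  let ?f = "arr_step R"
  have t: "t \<in> rcar R" using gen by (simp add: generated_by_def)
  obtain K where "\<forall>x\<in>rcar R. (?f ^^ K) (Some x) = None"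
    using wf by (auto simp: wf_rep_def nilpotent_rep_def)
  then have ex: "\<exists>k. (?f ^^ k) (Some t) = None" using t by blast
  define L where "L = (LEAST k. (?f ^^ k) (Some t) = None)"
  have fL: "(?f ^^ L) (Some t) = None" unfolding L_def using ex by (rule LeastI_ex)
  have alive: "(?f ^^ k) (Some t) \<noteq> None" if "k < L" for k
    using that unfolding L_def by (rule not_less_Least)
  have L1: "1 \<le> L" using fL by (cases L) auto
  define e where "e k = the ((?f ^^ k) (Some t))" for k
  have eS: "(?f ^^ k) (Some t) = Some (e k)" if "k < L" for k
    using alive[OF that] by (auto simp: e_def)
  have "inj_on e {..<L}"
  proof (rule inj_onI)
    fix i j assume "i \<in> {..<L}" "j \<in> {..<L}" "e i = e j"
    then show "i = j"
      using iterates_distinct[OF fL alive, of i j] iterates_distinct[OF fL alive, of j i] eS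
      by (metis lessThan_iff linorder_neqE_nat)
  qed
  moreover have "e ` {..<L} = rcar R"
  proof
    show "e ` {..<L} \<subseteq> rcar R" using wf_rep_iter_in_car[OF wf t eS] by auto
    show "rcar R \<subseteq> e ` {..<L}"
    proof
      fix z assume "z \<in> rcar R"
      then obtain k where k: "(?f ^^ k) (Some t) = Some z"
        using gen unfolding generated_by_def by blast
      have "k < L"
      proof (rule ccontr)
        assume "\<not> k < L"
        then have "(?f ^^ k) (Some t) = (?f ^^ (k - L)) ((?f ^^ L) (Some t))"
          using arr_step_iter_add[where R = R and i = "k - L" and j = L] by simp
        then show False using k fL by simp
      qed
      then show "z \<in> e ` {..<L}" using k eS by force
    qed
  qed
  ultimately show ?thesis using that L1 fL eS by (simp add: bij_betw_def)
qed

text \<open>Listing the orbit backwards, from the last nonzero iterate to the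
  generator, enumerates R as a path: element j is sent to element j - 1.\<close>
lemma generated_path:
  assumes wf: "wf_rep n R" and gen: "generated_by R t"
  shows "\<exists>(L::nat) h. 1 \<le> L \<and> bij_betw h {..<L} (rcar R) \<and>
           (\<forall>j<L. rarr R (h j) = (if j = 0 then None else Some (h (j - 1))))"
proof -
  let ?f = "arr_step R"
  obtain L :: nat and e where L1: "1 \<le> L" and fL: "(?f ^^ L) (Some t) = None"
    and eS: "\<And>k. k < L \<Longrightarrow> (?f ^^ k) (Some t) = Some (e k)" and e: "bij_betw e {..<L} (rcar R)"
    using generated_orbit[OF wf gen] by blast
  define h where "h j = e (L - 1 - j)" for j
  have "bij_betw (\<lambda>j. L - 1 - j) {..<L} {..<L}"
    by (rule bij_betw_byWitness[where f' = "\<lambda>j. L - 1 - j"]) auto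
  then have "bij_betw h {..<L} (rcar R)"
    unfolding h_def using bij_betw_trans[OF _ e] by (simp add: comp_def)
  moreover have "rarr R (h j) = (if j = 0 then None else Some (h (j - 1)))" if j: "j < L" for j
  proof -
    have "rarr R (h j) = (?f ^^ Suc (L - 1 - j)) (Some t)"
      using eS[of "L - 1 - j"] j by (simp add: h_def arr_step_iter_Suc)
    also have "Suc (L - 1 - j) = L - j" using j by simp
    finally have *: "rarr R (h j) = (?f ^^ (L - j)) (Some t)" .
    show ?thesis
    proof (cases "j = 0")
      case True
      then show ?thesis using * fL by simp
    next
      case False
      then have "L - 1 - (j - 1) = L - j" using j by simp
      then show ?thesis using * False eS[of "L - j"] j by (simp add: h_def)
    qed
  qed
  ultimately show ?thesis using L1 by blast
qed

text \<open>A representation enumerated as a path is a chain; the degrees are forced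
  by the degree of the bottom element.\<close>
lemma path_iso_chain:
  assumes wf: "wf_rep n R" and bij: "bij_betw h {..<L} (rcar R)"
    and arr: "\<And>j. j < L \<Longrightarrow> rarr R (h j) = (if j = 0 then None else Some (h (j - 1)))"
    and d: "d = rdeg R (h 0)"
  shows "iso_rep (chain n d L) R"
proof -
  have deg: "rdeg R (h j) = (d + j) mod n" if "j < L" for j
    using that
  proof (induction j)
    case 0
    have "d < n" using wf bij_betw_apply[OF bij] 0 d unfolding wf_rep_def by blast
    then show ?case using d by simp
  next
    case (Suc j)
    have hS: "h (Suc j) \<in> rcar R" using bij_betw_apply[OF bij] Suc.prems by simp
    have "rarr R (h (Suc j)) = Some (h j)" using arr[OF Suc.prems] by simp
    then have E: "rdeg R (h j) = (rdeg R (h (Suc j)) + n - 1) mod n"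
      using wf hS unfolding wf_rep_def by blast
    have D: "rdeg R (h (Suc j)) < n" using wf hS unfolding wf_rep_def by blast
    have "rdeg R (h (Suc j)) = ((rdeg R (h (Suc j)) + n - 1) mod n + 1) mod n"
      by (rule mod_pred_succ[OF D])
    also have "\<dots> = (rdeg R (h j) + 1) mod n" by (simp only: E)
    also have "\<dots> = (d + Suc j) mod n" using Suc by (simp add: mod_Suc_eq)
    finally show ?case .
  qed
  have "iso_map (chain n d L) R h"
    unfolding iso_map_def using bij deg arr by auto
  then show ?thesis by (auto simp: iso_rep_iff_iso_map)
qed

lemma generated_iso_chain:
  assumes wf: "wf_rep n R" and gen: "generated_by R t"
  shows "\<exists>d l. d < n \<and> 1 \<le> l \<and> iso_rep (chain n d l) R"
proof -
  obtain L :: nat and h where L: "1 \<le> L" "bij_betw h {..<L} (rcar R)"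
    "\<forall>j<L. rarr R (h j) = (if j = 0 then None else Some (h (j - 1)))"
    using generated_path[OF wf gen] by blast
  have "h 0 \<in> rcar R" using bij_betw_apply[OF L(2), of 0] L(1) by simp
  then have "rdeg R (h 0) < n" using wf unfolding wf_rep_def by blast
  then show ?thesis using path_iso_chain[OF wf L(2) _ refl] L by blast
qed

lemma generated_iso:
  assumes wf: "wf_rep n R" and iso: "iso_rep R S" and gen: "generated_by R t"
  shows "\<exists>t'. generated_by S t'"
proof -
  obtain h where h: "iso_map R S h" using iso by (auto simp: iso_rep_iff_iso_map)
  have t: "t \<in> rcar R" using gen by (simp add: generated_by_def)
  have "generated_by S (h t)"
    unfolding generated_by_def
  proof
    show "h t \<in> rcar S" using h t by (auto simp: iso_map_def dest: bij_betw_apply)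
    show "\<forall>z\<in>rcar S. \<exists>k. (arr_step S ^^ k) (Some (h t)) = Some z"
    proof
      fix z assume "z \<in> rcar S"
      then obtain x where x: "x \<in> rcar R" "z = h x" using h by (auto simp: iso_map_def bij_betw_def)
      then obtain k where "(arr_step R ^^ k) (Some t) = Some x" using gen by (auto simp: generated_by_def)
      then show "\<exists>k. (arr_step S ^^ k) (Some (h t)) = Some z"
        using iso_map_iter[OF wf h t] x by blast
    qed
  qed
  then show ?thesis by blast
qed

lemma indecomposable_iff_generated:
  "indecomposable n R \<longleftrightarrow> wf_rep n R \<and> (\<exists>t. generated_by R t)"
  by (meson generated_indecomposable indecomposable_def indecomposable_generated)

lemma chain_indecomposable: "n \<ge> 1 \<Longrightarrow> 1 \<le> l \<Longrightarrow> indecomposable n (chain n d l)"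
  using wf_chain chain_generated indecomposable_iff_generated by blast

lemma chain_iso_eq:
  assumes "iso_rep (chain n d l) (chain n d' l')" "d < n" "d' < n" "1 \<le> l"
  shows "d = d' \<and> l = l'"
proof -
  obtain h where h: "bij_betw h {..<l} {..<l'}"
    "\<forall>x\<in>{..<l}. (d' + h x) mod n = (d + x) mod n \<and>
       rarr (chain n d' l') (h x) = map_option h (rarr (chain n d l) x)"
    using assms(1) unfolding iso_rep_def by auto
  have "l = l'" using bij_betw_same_card[OF h(1)] by simp
  have "rarr (chain n d' l') (h 0) = None" using h(2) assms(4) by auto
  then have "h 0 = 0" by (simp split: if_splits)
  moreover have "(d' + h 0) mod n = (d + 0) mod n" using h(2) assms(4) by simp
  ultimately have "d' mod n = d mod n" by simp
  then show ?thesis using \<open>l = l'\<close> assms(2,3) by simp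
qed

lemma chain_cls_inj:
  assumes "n \<ge> 1" "d < n" "d' < n" "1 \<le> l" "cls n (chain n d l) = cls n (chain n d' l')"
  shows "d = d' \<and> l = l'"
  using chain_iso_eq assms cls_eq[OF wf_chain wf_chain] by blast

definition indec_classes :: "nat \<Rightarrow> qrep set set" where
  "indec_classes n = {cls n R | R. indecomposable n R}"

lemma indec_classes_isoclasses: "C \<in> indec_classes n \<Longrightarrow> C \<in> isoclasses n"
  unfolding indec_classes_def indecomposable_def using cls_in_isoclasses by blast

lemma indecomposable_cls:
  assumes wf: "wf_rep n S" and C: "cls n S \<in> indec_classes n"
  shows "indecomposable n S"
proof -
  obtain R where R: "indecomposable n R" "cls n S = cls n R"
    using C by (auto simp: indec_classes_def)
  have wfR: "wf_rep n R" using R(1) by (simp add: indecomposable_def)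
  obtain t where "generated_by R t" using R(1) indecomposable_iff_generated by blast
  moreover have "iso_rep R S" using R(2) cls_eq[OF wfR wf] by simp
  ultimately show ?thesis
    using generated_iso[OF wfR] wf indecomposable_iff_generated by blast
qed

lemma indecomposable_rep_of:
  assumes "C \<in> indec_classes n"
  shows "indecomposable n (rep_of C)"
proof -
  have "C \<in> isoclasses n" using indec_classes_isoclasses[OF assms] .
  then have "wf_rep n (rep_of C)" "C = cls n (rep_of C)" by (rule rep_of_cls)+
  then show ?thesis using indecomposable_cls assms by metis
qed

lemma indec_classes_chain:
  assumes n: "n \<ge> 1"
  shows "C \<in> indec_classes n \<longleftrightarrow> (\<exists>d l. d < n \<and> 1 \<le> l \<and> C = cls n (chain n d l))"
proof
  assume "C \<in> indec_classes n"
  then obtain R where R: "indecomposable n R" "C = cls n R" by (auto simp: indec_classes_def)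
  then have wf: "wf_rep n R" by (simp add: indecomposable_def)
  obtain d l where "d < n" "1 \<le> l" "iso_rep (chain n d l) R"
    using R(1) generated_iso_chain[OF wf] indecomposable_iff_generated by blast
  moreover have "cls n (chain n d l) = cls n R"
    using cls_eq[OF wf_chain[OF n] wf] \<open>iso_rep (chain n d l) R\<close> by simp
  ultimately show "\<exists>d l. d < n \<and> 1 \<le> l \<and> C = cls n (chain n d l)"
    using R(2) by blast
next
  assume "\<exists>d l. d < n \<and> 1 \<le> l \<and> C = cls n (chain n d l)"
  then show "C \<in> indec_classes n"
    using chain_indecomposable[OF n] by (auto simp: indec_classes_def)
qed

lemma zero_not_indec: "cls n zero_rep \<notin> indec_classes n"
proof
  assume "cls n zero_rep \<in> indec_classes n"
  then obtain R where R: "indecomposable n R" "cls n zero_rep = cls n R"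
    by (auto simp: indec_classes_def)
  then show False using cls_zero_iff[of n R] by (auto simp: indecomposable_def)
qed

lemma chain0_not_indec:
  assumes "n \<ge> 1"
  shows "cls n (chain n d 0) \<notin> indec_classes n"
proof -
  have "cls n (chain n d 0) = cls n zero_rep" using cls_zero_iff[OF wf_chain[OF assms]] by simp
  then show ?thesis using zero_not_indec by simp
qed

section \<open>Primitive elements of the Hall algebra\<close>

lemma sum_support_point:
  fixes x :: "'a \<Rightarrow> complex"
  assumes "finite {C. x C \<noteq> 0}"
  shows "(\<Sum>C\<in>{C. x C \<noteq> 0}. if C = D then x C else 0) = x D"
  using assms by (simp add: sum.delta)

lemma decomps_indecomposable:
  assumes "indecomposable n R"
  shows "decomps R = {({}, rcar R), (rcar R, {})}"
proof
  show "decomps R \<subseteq> {({}, rcar R), (rcar R, {})}"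
    using assms unfolding indecomposable_def decomps_def by auto
  show "{({}, rcar R), (rcar R, {})} \<subseteq> decomps R"
    using assms subreps_empty subreps_all unfolding decomps_def indecomposable_def by auto
qed

lemma hcomul_apply:
  "hcomul n x (C1, C2) = (\<Sum>C\<in>{C. x C \<noteq> 0}. x C * of_nat (card {(A, B) \<in> decomps (rep_of C).
     cls n (restr (rep_of C) A) = C1 \<and> cls n (restr (rep_of C) B) = C2}))"
  by (simp add: hcomul_def)

lemma indec_decomp_count:
  assumes C: "C \<in> indec_classes n"
  shows "card {(A, B) \<in> decomps (rep_of C).
            cls n (restr (rep_of C) A) = C1 \<and> cls n (restr (rep_of C) B) = C2}
       = (if C1 = cls n zero_rep \<and> C2 = C then 1 else 0) + (if C1 = C \<and> C2 = cls n zero_rep then 1 else 0)"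
proof -
  let ?R = "rep_of C" and ?Z = "cls n zero_rep"
  have ind: "indecomposable n ?R" using indecomposable_rep_of[OF C] .
  have wf: "wf_rep n ?R" and ne: "rcar ?R \<noteq> {}" using ind by (auto simp: indecomposable_def)
  have c0: "cls n (restr ?R {}) = ?Z"
    using cls_zero_iff[OF wf_restr[OF wf subreps_empty]] by simp
  have c1: "cls n (restr ?R (rcar ?R)) = C"
    unfolding restr_all using rep_of_cls(2)[OF indec_classes_isoclasses[OF C]] by (rule sym)
  have CZ: "C \<noteq> ?Z" using C zero_not_indec by blast
  have "{(A, B) \<in> decomps ?R. cls n (restr ?R A) = C1 \<and> cls n (restr ?R B) = C2}
      = (if C1 = ?Z \<and> C2 = C then {({}, rcar ?R)} else {})
        \<union> (if C1 = C \<and> C2 = ?Z then {(rcar ?R, {})} else {})"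
    unfolding decomps_indecomposable[OF ind] using c0 c1 CZ by auto
  then show ?thesis
    using ne CZ by (cases "C1 = ?Z \<and> C2 = C"; cases "C1 = C \<and> C2 = ?Z") auto
qed

lemma primitive_of_indec_support:
  assumes x: "x \<in> hall n" and supp: "\<And>C. x C \<noteq> 0 \<Longrightarrow> C \<in> indec_classes n"
  shows "primitive n x"
proof -
  let ?Z = "cls n zero_rep" and ?S = "{C. x C \<noteq> 0}"
  have fin: "finite ?S" using x by (simp add: hall_def)
  have "hcomul n x (C1, C2) = x C1 * hone n C2 + hone n C1 * x C2" for C1 C2
  proof -
    have "hcomul n x (C1, C2) = (\<Sum>C\<in>?S. (if C = C2 then (if C1 = ?Z then x C else 0) else 0)
        + (if C = C1 then (if C2 = ?Z then x C else 0) else 0))"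
      unfolding hcomul_apply
      by (rule sum.cong) (auto simp: indec_decomp_count[OF supp])
    also have "\<dots> = (if C1 = ?Z then x C2 else 0) + (if C2 = ?Z then x C1 else 0)"
      using sum_support_point[OF fin, of C1] sum_support_point[OF fin, of C2]
      by (auto simp: sum.distrib if_distrib cong: if_cong)
    finally show ?thesis by (auto simp: hone_def delta_def)
  qed
  then show ?thesis using x by (auto simp: primitive_def)
qed

lemma glue_iso:
  assumes dR: "(A, B) \<in> decomps R" and dS: "(A', B') \<in> decomps S"
    and iA: "iso_rep (restr R A) (restr S A')" and iB: "iso_rep (restr R B) (restr S B')"
  shows "iso_rep R S"
proof -
  obtain f where f: "iso_map (restr R A) (restr S A') f"
    using iA by (auto simp: iso_rep_iff_iso_map)
  obtain g where g: "iso_map (restr R B) (restr S B') g"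
    using iB by (auto simp: iso_rep_iff_iso_map)
  have R: "A \<inter> B = {}" "A \<union> B = rcar R" "\<forall>x\<in>A. \<forall>y. rarr R x = Some y \<longrightarrow> y \<in> A"
     "\<forall>x\<in>B. \<forall>y. rarr R x = Some y \<longrightarrow> y \<in> B"
    using dR by (auto simp: decomps_def subreps_def)
  have S: "A' \<inter> B' = {}" "A' \<union> B' = rcar S" using dS by (auto simp: decomps_def)
  define h where "h x = (if x \<in> A then f x else g x)" for x
  have "bij_betw h A A' = bij_betw f A A'" by (rule bij_betw_cong) (simp add: h_def)
  then have "bij_betw h A A'" using f by (simp add: iso_map_def)
  moreover have "bij_betw h B B' = bij_betw g B B'"
    by (rule bij_betw_cong) (use R(1) in \<open>auto simp: h_def\<close>)
  then have "bij_betw h B B'" using g by (simp add: iso_map_def)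
  ultimately have bij: "bij_betw h (rcar R) (rcar S)"
    using bij_betw_combine[OF _ _ S(1)] R(2) S(2) by metis
  have "rdeg S (h x) = rdeg R x \<and> rarr S (h x) = map_option h (rarr R x)" if x: "x \<in> rcar R" for x
  proof (cases "x \<in> A")
    case True
    have "map_option f (rarr R x) = map_option h (rarr R x)"
      using R(3) True by (cases "rarr R x") (auto simp: h_def)
    then show ?thesis using f True by (simp add: iso_map_def h_def)
  next
    case False
    then have xB: "x \<in> B" using x R(2) by blast
    have "map_option g (rarr R x) = map_option h (rarr R x)"
      using R(4,1) xB by (cases "rarr R x") (auto simp: h_def)
    then show ?thesis using g xB False by (simp add: iso_map_def h_def)
  qed
  then show ?thesis using bij by (auto simp: iso_rep_iff_iso_map iso_map_def)
qed

lemma decomps_cls_eq: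
  assumes wR: "wf_rep n R" and wS: "wf_rep n S"
    and dR: "(A, B) \<in> decomps R" and dS: "(A', B') \<in> decomps S"
    and "cls n (restr R A) = cls n (restr S A')" "cls n (restr R B) = cls n (restr S B')"
  shows "cls n R = cls n S"
proof -
  have "A \<in> subreps R" "B \<in> subreps R" "A' \<in> subreps S" "B' \<in> subreps S"
    using dR dS by (auto simp: decomps_def)
  then have "iso_rep (restr R A) (restr S A')" "iso_rep (restr R B) (restr S B')"
    using assms(5,6) cls_eq[OF wf_restr[OF wR] wf_restr[OF wS]] by auto
  then show ?thesis using glue_iso[OF dR dS] cls_eq[OF wR wS] by simp
qed

text \<open>A primitive element vanishes on the class of the zero representation:
  the coefficient of [0] (x) [0] in its coproduct is x [0] on one side and
  2 x [0] on the other.\<close>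
lemma primitive_zero_class:
  assumes p: "primitive n x"
  shows "x (cls n zero_rep) = 0"
proof -
  let ?Z = "cls n zero_rep" and ?S = "{C. x C \<noteq> 0}"
  have x: "x \<in> hall n" and hc: "hcomul n x = (\<lambda>(C1, C2). x C1 * hone n C2 + hone n C1 * x C2)"
    using p by (auto simp: primitive_def)
  have fin: "finite ?S" using x by (simp add: hall_def)
  have count: "card {(A, B) \<in> decomps (rep_of C). cls n (restr (rep_of C) A) = ?Z
      \<and> cls n (restr (rep_of C) B) = ?Z} = (if C = ?Z then 1 else 0)" if C: "C \<in> ?S" for C
  proof -
    have ic: "C \<in> isoclasses n" using x C by (auto simp: hall_def)
    note rC = rep_of_cls[OF ic]
    have "cls n (restr (rep_of C) A) = ?Z \<longleftrightarrow> A = {}" if "A \<in> subreps (rep_of C)" for A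
      using cls_zero_iff[OF wf_restr[OF rC(1) that]] by simp
    then have "{(A, B) \<in> decomps (rep_of C). cls n (restr (rep_of C) A) = ?Z
        \<and> cls n (restr (rep_of C) B) = ?Z} = (if rcar (rep_of C) = {} then {({}, {})} else {})"
      using subreps_empty by (auto simp: decomps_def)
    then show ?thesis using cls_zero_iff[OF rC(1)] rC(2) by auto
  qed
  have "hcomul n x (?Z, ?Z) = (\<Sum>C\<in>?S. if C = ?Z then x C else 0)"
    unfolding hcomul_apply by (rule sum.cong) (auto simp: count)
  also have "\<dots> = x ?Z" by (rule sum_support_point[OF fin])
  finally show ?thesis using hc by (simp add: hone_def delta_def)
qed

text \<open>A primitive element vanishes on a class with a nontrivial decomposition
  A (+) B: the coefficient of [A] (x) [B] in its coproduct only sees that class,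
  with positive multiplicity, while the primitivity formula gives zero.\<close>
lemma primitive_decomposable_class:
  assumes p: "primitive n x" and ic: "C \<in> isoclasses n"
    and AB: "(A, B) \<in> decomps (rep_of C)" "A \<noteq> {}" "B \<noteq> {}"
  shows "x C = 0"
proof (rule ccontr)
  assume xC: "x C \<noteq> 0"
  let ?Z = "cls n zero_rep" and ?S = "{C. x C \<noteq> 0}" and ?R = "rep_of C"
  have x: "x \<in> hall n" and hc: "hcomul n x = (\<lambda>(C1, C2). x C1 * hone n C2 + hone n C1 * x C2)"
    using p by (auto simp: primitive_def)
  have fin: "finite ?S" and supp: "\<And>C. x C \<noteq> 0 \<Longrightarrow> C \<in> isoclasses n"
    using x by (auto simp: hall_def)
  have wf: "wf_rep n ?R" and Ceq: "C = cls n ?R" using rep_of_cls[OF ic] by auto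
  define C1 where "C1 = cls n (restr ?R A)"
  define C2 where "C2 = cls n (restr ?R B)"
  have "A \<in> subreps ?R" "B \<in> subreps ?R" using AB(1) by (auto simp: decomps_def)
  then have C1Z: "C1 \<noteq> ?Z" and C2Z: "C2 \<noteq> ?Z"
    using cls_zero_iff[OF wf_restr[OF wf]] AB(2,3) by (auto simp: C1_def C2_def)
  define D where "D C' = {(A, B) \<in> decomps (rep_of C').
           cls n (restr (rep_of C') A) = C1 \<and> cls n (restr (rep_of C') B) = C2}" for C'
  have only_C: "D C' = {}" if C': "C' \<in> ?S" "C' \<noteq> C" for C'
  proof (rule ccontr)
    assume "D C' \<noteq> {}"
    then obtain A' B' where AB': "(A', B') \<in> decomps (rep_of C')"
      "cls n (restr (rep_of C') A') = C1" "cls n (restr (rep_of C') B') = C2"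
      by (auto simp: D_def)
    have wf': "wf_rep n (rep_of C')" and Ceq': "C' = cls n (rep_of C')"
      using rep_of_cls[OF supp] C' by auto
    have "cls n (rep_of C') = cls n ?R"
      using decomps_cls_eq[OF wf' wf AB'(1) AB(1)] AB'(2,3) by (simp add: C1_def C2_def)
    then show False using Ceq Ceq' C'(2) by simp
  qed
  have "hcomul n x (C1, C2) = (\<Sum>C'\<in>?S. if C' = C then x C' * of_nat (card (D C')) else 0)"
    unfolding hcomul_apply D_def[symmetric] by (rule sum.cong) (auto simp: only_C)
  also have "\<dots> = x C * of_nat (card (D C))" using fin xC by (simp add: sum.delta)
  finally have "x C * of_nat (card (D C)) = 0" using hc C1Z C2Z by (simp add: hone_def delta_def)
  moreover have "card (D C) \<noteq> 0"
  proof -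
    have "finite (D C)" by (rule finite_subset[OF _ finite_decomps[OF wf]]) (auto simp: D_def)
    moreover have "(A, B) \<in> D C" using AB(1) by (simp add: D_def C1_def C2_def)
    ultimately show ?thesis by (auto simp: card_eq_0_iff)
  qed
  ultimately show False using xC by simp
qed

lemma primitive_support_indec:
  assumes p: "primitive n x" and xC: "x C \<noteq> 0"
  shows "C \<in> indec_classes n"
proof -
  have ic: "C \<in> isoclasses n" using p xC by (auto simp: primitive_def hall_def)
  note rC = rep_of_cls[OF ic]
  have "rcar (rep_of C) \<noteq> {}"
    using primitive_zero_class[OF p] xC rC cls_zero_iff by metis
  moreover have "\<not> ((A, B) \<in> decomps (rep_of C) \<and> A \<noteq> {} \<and> B \<noteq> {})" for A B
    using primitive_decomposable_class[OF p ic] xC by blast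
  ultimately have "indecomposable n (rep_of C)"
    using rC(1) by (auto simp: indecomposable_def)
  then show ?thesis using rC(2) by (auto simp: indec_classes_def)
qed

lemma nQ_char: "x \<in> nQ n \<longleftrightarrow> x \<in> hall n \<and> (\<forall>C. x C \<noteq> 0 \<longrightarrow> C \<in> indec_classes n)"
  using primitive_of_indec_support primitive_support_indec by (auto simp: nQ_def primitive_def)

section \<open>The Hall product on chains\<close>

lemma hmul_apply:
  "C \<in> isoclasses n \<Longrightarrow> hmul n a b C =
     (\<Sum>A\<in>subreps (rep_of C). b (cls n (restr (rep_of C) A)) * a (cls n (quot (rep_of C) A)))"
  by (simp add: hmul_def)

lemma subreps_chain: "subreps (chain n d l) = (\<lambda>p. {..<p}) ` {..l}"
proof
  show "(\<lambda>p. {..<p}) ` {..l} \<subseteq> subreps (chain n d l)"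
    by (auto simp: subreps_def)
  show "subreps (chain n d l) \<subseteq> (\<lambda>p. {..<p}) ` {..l}"
  proof
    fix A assume A: "A \<in> subreps (chain n d l)"
    then have Al: "A \<subseteq> {..<l}" by (simp add: subreps_def)
    have pred: "x - 1 \<in> A" if "x \<in> A" for x
      using A that by (cases x) (auto simp: subreps_def)
    have down: "x - k \<in> A" if "x \<in> A" for x k
      using that by (induction k) (auto simp: diff_Suc dest: pred split: nat.split)
    show "A \<in> (\<lambda>p. {..<p}) ` {..l}"
    proof (cases "A = {}")
      case True
      then show ?thesis by (intro image_eqI[where x = 0]) auto
    next
      case False
      have fin: "finite A" using Al finite_subset by blast
      have mA: "Max A \<in> A" using Max_in[OF fin False] .
      have "x \<in> A" if "x \<le> Max A" for x
        using down[OF mA, of "Max A - x"] that by simp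
      then have "A = {..<Suc (Max A)}"
        using Max_ge[OF fin] by (auto simp: less_Suc_eq_le)
      moreover have "Suc (Max A) \<le> l" using mA Al by auto
      ultimately show ?thesis by (intro image_eqI[where x = "Suc (Max A)"]) auto
    qed
  qed
qed

lemma quot_chain_iso:
  assumes "p \<le> l"
  shows "iso_rep (quot (chain n d l) {..<p}) (chain n ((d + p) mod n) (l - p))"
proof -
  have "bij_betw (\<lambda>j. j - p) ({..<l} - {..<p}) {..<l - p}"
    by (rule bij_betw_byWitness[where f' = "\<lambda>j. j + p"]) auto
  moreover have "((d + p) mod n + (x - p)) mod n = (d + x) mod n" if "p \<le> x" for x
  proof -
    have "((d + p) mod n + (x - p)) mod n = (d + p + (x - p)) mod n" by (simp add: mod_add_left_eq)
    then show ?thesis using that by simp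
  qed
  ultimately have "iso_map (quot (chain n d l) {..<p}) (chain n ((d + p) mod n) (l - p)) (\<lambda>j. j - p)"
    by (auto simp: iso_map_def rarr_quot)
  then show ?thesis by (auto simp: iso_rep_iff_iso_map)
qed

lemma hmul_chain:
  assumes n: "n \<ge> 1"
  shows "hmul n a b (cls n (chain n d l))
     = (\<Sum>p\<le>l. b (cls n (chain n d p)) * a (cls n (chain n ((d + p) mod n) (l - p))))"
proof -
  let ?C = "cls n (chain n d l)"
  have wc: "wf_rep n (chain n d l)" using wf_chain[OF n] .
  have ic: "?C \<in> isoclasses n" using cls_in_isoclasses[OF wc] .
  have wfR: "wf_rep n (rep_of ?C)" and eq: "?C = cls n (rep_of ?C)" using rep_of_cls[OF ic] by auto
  have iso: "iso_rep (rep_of ?C) (chain n d l)" using cls_eq[OF wfR wc] eq by simp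
  have "hmul n a b ?C
      = (\<Sum>A\<in>subreps (chain n d l). b (cls n (restr (chain n d l) A)) * a (cls n (quot (chain n d l) A)))"
    unfolding hmul_apply[OF ic] by (rule sum_subreps_iso[OF wfR wc iso])
  also have "\<dots> = (\<Sum>p\<le>l. b (cls n (restr (chain n d l) {..<p})) * a (cls n (quot (chain n d l) {..<p})))"
    unfolding subreps_chain by (subst sum.reindex) (auto simp: inj_on_def)
  also have "\<dots> = (\<Sum>p\<le>l. b (cls n (chain n d p)) * a (cls n (chain n ((d + p) mod n) (l - p))))"
  proof (rule sum.cong[OF refl])
    fix p assume p: "p \<in> {..l}"
    have "{..<p} \<in> subreps (chain n d l)" using p unfolding subreps_chain by auto
    then have "cls n (quot (chain n d l) {..<p}) = cls n (chain n ((d + p) mod n) (l - p))"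
      using cls_eq[OF wf_quot[OF wc] wf_chain[OF n]] quot_chain_iso p by simp
    then show "b (cls n (restr (chain n d l) {..<p})) * a (cls n (quot (chain n d l) {..<p}))
      = b (cls n (chain n d p)) * a (cls n (chain n ((d + p) mod n) (l - p)))"
      by (simp add: restr_chain)
  qed
  finally show ?thesis .
qed

section \<open>Symmetry of the product on decomposable classes\<close>

text \<open>An arrow entering a generated subrepresentation A from outside must hit
  the generator u: any other element of A already has a predecessor in A, and
  arrows are injective.\<close>
lemma arrow_into_generated:
  assumes wf: "wf_rep n R" and A: "A \<in> subreps R" and u: "generated_by (restr R A) u"
    and y: "y \<in> rcar R" "y \<notin> A" and yz: "rarr R y = Some z" and zA: "z \<in> A"
  shows "z = u"
proof -
  have AR: "A \<subseteq> rcar R" and clA: "\<forall>x\<in>A. \<forall>y. rarr R x = Some y \<longrightarrow> y \<in> A"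
    using A by (auto simp: subreps_def)
  have uA: "u \<in> A" using u by (simp add: generated_by_def)
  obtain i where i: "(arr_step R ^^ i) (Some u) = Some z" using u zA by (auto simp: generated_by_def)
  show ?thesis
  proof (cases i)
    case 0
    then show ?thesis using i by simp
  next
    case (Suc i')
    then obtain w where w: "(arr_step R ^^ i') (Some u) = Some w" "rarr R w = Some z"
      using i by (cases "(arr_step R ^^ i') (Some u)") (auto simp: arr_step_iter_Suc)
    have "w \<in> A" using arr_step_iter_closed[OF clA uA w(1)] .
    moreover have "w = y" using wf_rep_arr_inj[OF wf _ y(1) w(2) yz] AR calculation by blast
    ultimately show ?thesis using y(2) by simp
  qed
qed

text \<open>In a decomposable R, a subrepresentation A with indecomposable A and R/A
  has a complement that is again a subrepresentation.  Otherwise some arrow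
  leads from outside A into A, hence to the generator u of A, and then the
  generator t of R/A generates all of R, making R indecomposable.\<close>
lemma compl_subrep:
  assumes wf: "wf_rep n R" and A: "A \<in> subreps R"
    and indA: "cls n (restr R A) \<in> indec_classes n" and indQ: "cls n (quot R A) \<in> indec_classes n"
    and nind: "\<not> indecomposable n R"
  shows "rcar R - A \<in> subreps R"
proof (rule ccontr)
  assume "rcar R - A \<notin> subreps R"
  then obtain y z where y: "y \<in> rcar R" "y \<notin> A" and yz: "rarr R y = Some z" and zA: "z \<in> A"
    using wf_rep_arr[OF wf] by (auto simp: subreps_def)
  obtain u where u: "generated_by (restr R A) u"
    using indecomposable_cls[OF wf_restr[OF wf A] indA] indecomposable_iff_generated by blast
  obtain t where t: "generated_by (quot R A) t"
    using indecomposable_cls[OF wf_quot[OF wf A] indQ] indecomposable_iff_generated by blast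
  have reachA: "\<exists>k. (arr_step R ^^ k) (Some u) = Some w" if "w \<in> A" for w
    using u that unfolding generated_by_def by simp
  have reachB: "\<exists>k. (arr_step R ^^ k) (Some t) = Some w" if "w \<in> rcar R - A" for w
  proof -
    have "\<exists>k. (arr_step (quot R A) ^^ k) (Some t) = Some w"
      using t that unfolding generated_by_def by auto
    then obtain k where "(arr_step (quot R A) ^^ k) (Some t) = Some w" by blast
    then have "(arr_step R ^^ k) (Some t) = Some w"
      by (rule arr_step_iter_mono[rotated]) (simp add: rarr_quot_Some)
    then show ?thesis by blast
  qed
  obtain k where "(arr_step R ^^ k) (Some t) = Some y" using reachB y by blast
  then have ku: "(arr_step R ^^ Suc k) (Some t) = Some u"
    using yz arrow_into_generated[OF wf A u y yz zA] by (simp add: arr_step_iter_Suc)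
  have "generated_by R t"
    unfolding generated_by_def
  proof (intro conjI ballI)
    show "t \<in> rcar R" using t by (simp add: generated_by_def)
    fix w assume w: "w \<in> rcar R"
    show "\<exists>k. (arr_step R ^^ k) (Some t) = Some w"
    proof (cases "w \<in> A")
      case False
      then show ?thesis using reachB w by blast
    next
      case True
      then obtain i where "(arr_step R ^^ i) (Some u) = Some w" using reachA by blast
      then have "(arr_step R ^^ (i + Suc k)) (Some t) = Some w"
        by (simp only: arr_step_iter_add ku)
      then show ?thesis by blast
    qed
  qed
  then show False using nind wf indecomposable_iff_generated by blast
qed

lemma decomp_restr_iso_quot:
  assumes "(A, B) \<in> decomps R"
  shows "iso_rep (restr R B) (quot R A)"
proof -
  have B: "B = rcar R - A" and clB: "\<forall>x\<in>B. \<forall>y. rarr R x = Some y \<longrightarrow> y \<in> B"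
    using assms by (auto simp: decomps_def subreps_def)
  have "rarr (quot R A) x = rarr R x" if "x \<in> B" for x
  proof (cases "rarr R x")
    case (Some y)
    then have "y \<notin> A" using clB that B by blast
    then show ?thesis using Some by (simp add: rarr_quot)
  qed (simp add: rarr_quot)
  then have "iso_map (restr R B) (quot R A) id"
    unfolding iso_map_def using B by (simp add: option.map_id)
  then show ?thesis unfolding iso_rep_iff_iso_map by blast
qed

lemma compl_exchanges_sub_quot:
  assumes wf: "wf_rep n R" and A: "A \<in> subreps R" and B: "rcar R - A \<in> subreps R"
  shows "cls n (restr R (rcar R - A)) = cls n (quot R A)"
    and "cls n (quot R (rcar R - A)) = cls n (restr R A)"
proof -
  have AR: "A \<subseteq> rcar R" using A by (simp add: subreps_def)
  then have "(A, rcar R - A) \<in> decomps R" "(rcar R - A, A) \<in> decomps R"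
    using A B by (auto simp: decomps_def)
  then show "cls n (restr R (rcar R - A)) = cls n (quot R A)"
    and "cls n (quot R (rcar R - A)) = cls n (restr R A)"
    using decomp_restr_iso_quot cls_eq[OF wf_restr[OF wf B] wf_quot[OF wf A]]
      cls_eq[OF wf_restr[OF wf A] wf_quot[OF wf B]] by auto
qed

text \<open>On a decomposable class, the product of two functions supported on
  indecomposable classes is symmetric: only subrepresentations A with
  indecomposable A and R/A contribute, and A -> rcar R - A is an involution on
  them exchanging the roles of sub and quotient.\<close>
lemma hmul_sym:
  assumes ic: "C \<in> isoclasses n" and nind: "C \<notin> indec_classes n"
    and a: "\<And>C. a C \<noteq> 0 \<Longrightarrow> C \<in> indec_classes n"
    and b: "\<And>C. b C \<noteq> 0 \<Longrightarrow> C \<in> indec_classes n"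
  shows "hmul n a b C = hmul n b a C"
proof -
  let ?R = "rep_of C"
  have wf: "wf_rep n ?R" and Ceq: "C = cls n ?R" using rep_of_cls[OF ic] by auto
  have nindR: "\<not> indecomposable n ?R" using nind Ceq by (auto simp: indec_classes_def)
  let ?T = "{A \<in> subreps ?R. cls n (restr ?R A) \<in> indec_classes n \<and> cls n (quot ?R A) \<in> indec_classes n}"
  have fin: "finite (subreps ?R)" using finite_subreps[OF wf] .
  have restrict: "(\<Sum>A\<in>subreps ?R. f (cls n (restr ?R A)) * g (cls n (quot ?R A)))
     = (\<Sum>A\<in>?T. f (cls n (restr ?R A)) * g (cls n (quot ?R A)))"
    if f: "\<And>C. f C \<noteq> 0 \<Longrightarrow> C \<in> indec_classes n"
      and g: "\<And>C. g C \<noteq> 0 \<Longrightarrow> C \<in> indec_classes n" for f g :: "qrep set \<Rightarrow> complex"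
    by (rule sum.mono_neutral_right[OF fin]) (use f g in fastforce)+
  define cp where "cp A = rcar ?R - A" for A
  have cp: "cp A \<in> ?T \<and> cp (cp A) = A \<and> cls n (restr ?R (cp A)) = cls n (quot ?R A)
      \<and> cls n (quot ?R (cp A)) = cls n (restr ?R A)" if A: "A \<in> ?T" for A
  proof -
    have As: "A \<in> subreps ?R" using A by simp
    have sB: "cp A \<in> subreps ?R" unfolding cp_def using compl_subrep[OF wf As] A nindR by simp
    have "cp (cp A) = A" using As by (auto simp: cp_def subreps_def)
    then show ?thesis using compl_exchanges_sub_quot[OF wf As] sB A by (simp add: cp_def)
  qed
  have "hmul n a b C = (\<Sum>A\<in>?T. b (cls n (restr ?R A)) * a (cls n (quot ?R A)))"
    using hmul_apply[OF ic] restrict[OF b a] by simp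
  also have "\<dots> = (\<Sum>A\<in>?T. a (cls n (restr ?R A)) * b (cls n (quot ?R A)))"
    by (rule sum.reindex_bij_witness[where i = cp and j = cp]) (use cp in \<open>auto simp: mult.commute\<close>)
  also have "\<dots> = hmul n b a C"
    using hmul_apply[OF ic] restrict[OF a b] by simp
  finally show ?thesis .
qed

section \<open>The map from a_+ to n_Q\<close>

definition aplus_index :: "nat \<Rightarrow> nat \<Rightarrow> nat \<Rightarrow> nat \<Rightarrow> bool" where
  "aplus_index n m r s \<longleftrightarrow> r < n \<and> s < n \<and> (1 \<le> m \<or> r < s)"

definition chain_class :: "nat \<Rightarrow> nat \<Rightarrow> nat \<Rightarrow> nat \<Rightarrow> qrep set" where
  "chain_class n m r s = cls n (chain n r (m * n + s - r))"

text \<open>The index of an indecomposable class (unique by chain_class_inj below).\<close>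
definition index_of :: "nat \<Rightarrow> qrep set \<Rightarrow> nat \<times> nat \<times> nat" where
  "index_of n C = (SOME (m, r, s). aplus_index n m r s \<and> C = chain_class n m r s)"

definition hall_map :: "nat \<Rightarrow> (nat \<Rightarrow> nat \<Rightarrow> nat \<Rightarrow> complex) \<Rightarrow> qrep set \<Rightarrow> complex" where
  "hall_map n x C = (if C \<in> indec_classes n then (case index_of n C of (m, r, s) \<Rightarrow> x m r s) else 0)"

lemma aplus_index_of_aplus: "x \<in> aplus n \<Longrightarrow> x m r s \<noteq> 0 \<Longrightarrow> aplus_index n m r s"
  by (auto simp: aplus_def aplus_index_def)

lemma aplus_index_length:
  assumes "aplus_index n m r s"
  shows "1 \<le> m * n + s - r" "(r + (m * n + s - r)) div n = m" "(r + (m * n + s - r)) mod n = s"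
proof -
  have r: "r < n" and s: "s < n" and c: "1 \<le> m \<or> r < s" using assms by (auto simp: aplus_index_def)
  have "r < m * n + s"
  proof (cases "1 \<le> m")
    case True
    then have "n \<le> m * n" by simp
    then show ?thesis using r by linarith
  next
    case False
    then show ?thesis using c by simp
  qed
  then have "r + (m * n + s - r) = m * n + s" by simp
  then show "1 \<le> m * n + s - r" "(r + (m * n + s - r)) div n = m" "(r + (m * n + s - r)) mod n = s"
    using \<open>r < m * n + s\<close> s by auto
qed

lemma chain_index:
  assumes n: "n \<ge> 1" and d: "d < n" and l: "1 \<le> l"
  shows "aplus_index n ((d + l) div n) d ((d + l) mod n)"
    and "chain_class n ((d + l) div n) d ((d + l) mod n) = cls n (chain n d l)"
proof -
  have "1 \<le> (d + l) div n \<or> d < (d + l) mod n"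
  proof (cases "d + l < n")
    case True
    then show ?thesis using l by simp
  next
    case False
    then have "0 < (d + l) div n" using n by (simp add: div_greater_zero_iff)
    then show ?thesis by simp
  qed
  then show "aplus_index n ((d + l) div n) d ((d + l) mod n)"
    using d n by (simp add: aplus_index_def)
  have "(d + l) div n * n + (d + l) mod n - d = l" by simp
  then show "chain_class n ((d + l) div n) d ((d + l) mod n) = cls n (chain n d l)"
    by (simp add: chain_class_def)
qed

lemma chain_class_indec:
  assumes n: "n \<ge> 1" and v: "aplus_index n m r s"
  shows "chain_class n m r s \<in> indec_classes n"
proof -
  have "r < n" using v by (simp add: aplus_index_def)
  then show ?thesis
    using indec_classes_chain[OF n] aplus_index_length(1)[OF v] by (auto simp: chain_class_def)
qed

lemma indec_classes_index:
  assumes n: "n \<ge> 1" and C: "C \<in> indec_classes n"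
  obtains m r s where "aplus_index n m r s" "C = chain_class n m r s"
proof -
  obtain d l where "d < n" "1 \<le> l" "C = cls n (chain n d l)"
    using indec_classes_chain[OF n] C by blast
  then show ?thesis using chain_index[OF n] that by metis
qed

lemma chain_class_inj:
  assumes n: "n \<ge> 1" and v: "aplus_index n m r s" and v': "aplus_index n m' r' s'"
    and eq: "chain_class n m r s = chain_class n m' r' s'"
  shows "m = m' \<and> r = r' \<and> s = s'"
proof -
  have "r < n" "r' < n" using v v' by (auto simp: aplus_index_def)
  then have "r = r' \<and> m * n + s - r = m' * n + s' - r'"
    using chain_cls_inj[OF n _ _ aplus_index_length(1)[OF v]] eq by (simp add: chain_class_def)
  then show ?thesis using aplus_index_length(2,3)[OF v] aplus_index_length(2,3)[OF v'] by metis
qed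

lemma hall_map_chain_class:
  assumes n: "n \<ge> 1" and v: "aplus_index n m r s"
  shows "hall_map n x (chain_class n m r s) = x m r s"
proof -
  let ?P = "\<lambda>(m', r', s'). aplus_index n m' r' s' \<and> chain_class n m r s = chain_class n m' r' s'"
  have "?P (m, r, s)" using v by simp
  then have "?P (index_of n (chain_class n m r s))"
    unfolding index_of_def by (rule someI)
  then have "index_of n (chain_class n m r s) = (m, r, s)"
    using chain_class_inj[OF n v] by (auto split: prod.splits)
  moreover have "chain_class n m r s \<in> indec_classes n" using chain_class_indec[OF n v] .
  ultimately show ?thesis by (simp add: hall_map_def)
qed

lemma hall_map_chain:
  assumes n: "n \<ge> 1" and d: "d < n" and l: "1 \<le> l"
  shows "hall_map n x (cls n (chain n d l)) = x ((d + l) div n) d ((d + l) mod n)"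
  using hall_map_chain_class[OF n chain_index(1)[OF n d l]] chain_index(2)[OF n d l] by simp

lemma hall_map_outside: "C \<notin> indec_classes n \<Longrightarrow> hall_map n x C = 0"
  by (simp add: hall_map_def)

lemma hall_map_add: "hall_map n (\<lambda>m r s. x m r s + y m r s) = (\<lambda>C. hall_map n x C + hall_map n y C)"
  by (auto simp: hall_map_def fun_eq_iff split: prod.split)

lemma hall_map_smult: "hall_map n (\<lambda>m r s. c * x m r s) = (\<lambda>C. c * hall_map n x C)"
  by (auto simp: hall_map_def fun_eq_iff split: prod.split)

lemma hall_map_nQ:
  assumes n: "n \<ge> 1" and x: "x \<in> aplus n"
  shows "hall_map n x \<in> nQ n"
proof -
  let ?M = "{m. \<exists>r s. x m r s \<noteq> 0}"
  let ?K = "\<lambda>(m, r, s). chain_class n m r s"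
  have supp: "C \<in> indec_classes n" if "hall_map n x C \<noteq> 0" for C
    using hall_map_outside that by blast
  have "{C. hall_map n x C \<noteq> 0} \<subseteq> ?K ` (?M \<times> {..<n} \<times> {..<n})"
  proof
    fix C assume "C \<in> {C. hall_map n x C \<noteq> 0}"
    then have C: "hall_map n x C \<noteq> 0" by simp
    obtain m r s where v: "aplus_index n m r s" and CK: "C = chain_class n m r s"
      using indec_classes_index[OF n supp[OF C]] by blast
    have "x m r s \<noteq> 0" using C unfolding CK hall_map_chain_class[OF n v] .
    then have "(m, r, s) \<in> ?M \<times> {..<n} \<times> {..<n}" using v by (auto simp: aplus_index_def)
    then show "C \<in> ?K ` (?M \<times> {..<n} \<times> {..<n})"
      unfolding CK by (rule rev_image_eqI) simp
  qed
  moreover have "finite (?M \<times> {..<n} \<times> {..<n})" using x by (simp add: aplus_def)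
  ultimately have "finite {C. hall_map n x C \<noteq> 0}" by (meson finite_imageI finite_subset)
  then have "hall_map n x \<in> hall n"
    unfolding hall_def using supp indec_classes_isoclasses by blast
  then show ?thesis using supp nQ_char by blast
qed

lemma hall_map_inj:
  assumes n: "n \<ge> 1"
  shows "inj_on (hall_map n) (aplus n)"
proof (rule inj_onI)
  fix x y assume x: "x \<in> aplus n" and y: "y \<in> aplus n" and eq: "hall_map n x = hall_map n y"
  have "x m r s = y m r s" for m r s
  proof (cases "aplus_index n m r s")
    case True
    then show ?thesis using hall_map_chain_class[OF n True] eq by metis
  next
    case False
    then show ?thesis using aplus_index_of_aplus[OF x] aplus_index_of_aplus[OF y] by metis
  qed
  then show "x = y" by blast
qed

text \<open>A primitive z is hall_map of its values on the indexed chains.\<close>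
lemma hall_map_surj:
  assumes n: "n \<ge> 1" and z: "z \<in> nQ n"
  shows "\<exists>x\<in>aplus n. hall_map n x = z"
proof -
  have zh: "z \<in> hall n" and zG: "\<And>C. z C \<noteq> 0 \<Longrightarrow> C \<in> indec_classes n"
    using z by (auto simp: nQ_char)
  define x where "x m r s = (if aplus_index n m r s then z (chain_class n m r s) else 0)" for m r s
  let ?S = "{(m, r, s). aplus_index n m r s \<and> z (chain_class n m r s) \<noteq> 0}"
  have "inj_on (\<lambda>(m, r, s). chain_class n m r s) ?S"
    by (rule inj_onI) (use chain_class_inj[OF n] in auto)
  moreover have "(\<lambda>(m, r, s). chain_class n m r s) ` ?S \<subseteq> {C. z C \<noteq> 0}" by auto
  then have "finite ((\<lambda>(m, r, s). chain_class n m r s) ` ?S)"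
    using zh finite_subset by (auto simp: hall_def)
  ultimately have "finite ?S" using finite_imageD by blast
  moreover have "{m. \<exists>r s. x m r s \<noteq> 0} \<subseteq> fst ` ?S"
  proof
    fix m assume "m \<in> {m. \<exists>r s. x m r s \<noteq> 0}"
    then obtain r s where "x m r s \<noteq> 0" by blast
    then have "(m, r, s) \<in> ?S" by (auto simp: x_def split: if_splits)
    then show "m \<in> fst ` ?S" by (auto intro: image_eqI[where x = "(m, r, s)"])
  qed
  ultimately have "finite {m. \<exists>r s. x m r s \<noteq> 0}" using finite_subset by blast
  then have "x \<in> aplus n" by (auto simp: aplus_def x_def aplus_index_def split: if_splits)
  moreover have "hall_map n x C = z C" for C
  proof (cases "C \<in> indec_classes n")
    case True
    then obtain m r s where "aplus_index n m r s" "C = chain_class n m r s"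
      by (rule indec_classes_index[OF n])
    then show ?thesis using hall_map_chain_class[OF n] by (simp add: x_def)
  next
    case False
    then show ?thesis using hall_map_outside zG by metis
  qed
  ultimately show ?thesis by blast
qed

lemma hall_map_bij: "n \<ge> 1 \<Longrightarrow> bij_betw (hall_map n) (aplus n) (nQ n)"
  unfolding bij_betw_def using hall_map_inj hall_map_nQ hall_map_surj by fast

lemma hall_map_Ebasis:
  assumes n: "n \<ge> 1" and v: "aplus_index n m r s"
  shows "hall_map n (Ebasis r s m) = delta (chain_class n m r s)"
proof
  fix C
  show "hall_map n (Ebasis r s m) C = delta (chain_class n m r s) C"
  proof (cases "C \<in> indec_classes n")
    case True
    then obtain m' r' s' where v': "aplus_index n m' r' s'" and C: "C = chain_class n m' r' s'"
      by (rule indec_classes_index[OF n])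
    have "hall_map n (Ebasis r s m) C = (if m' = m \<and> r' = r \<and> s' = s then 1 else 0)"
      unfolding C hall_map_chain_class[OF n v'] by (simp add: Ebasis_def)
    also have "\<dots> = delta (chain_class n m r s) C"
      using chain_class_inj[OF n v' v] unfolding C delta_def by auto
    finally show ?thesis .
  next
    case False
    then have "C \<noteq> chain_class n m r s" using chain_class_indec[OF n v] by blast
    then show ?thesis using hall_map_outside[OF False] by (simp add: delta_def)
  qed
qed

lemma Ebasis_aplus:
  assumes "aplus_index n m r s"
  shows "Ebasis r s m \<in> aplus n"
proof -
  have "{m'. \<exists>r' s'. Ebasis r s m m' r' s' \<noteq> 0} = {m}" by (auto simp: Ebasis_def)
  then show ?thesis using assms unfolding aplus_def aplus_index_def by (simp add: Ebasis_def)
qed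

lemma hall_map_basis:
  assumes n: "n \<ge> 1"
  shows "bij_betw (hall_map n) (aplus_basis n) (indec_basis n)"
proof -
  have basis: "aplus_basis n = {Ebasis r s m | r s m. aplus_index n m r s}"
    by (auto simp: aplus_basis_def aplus_index_def)
  have indec: "indec_basis n = {delta C | C. C \<in> indec_classes n}"
    by (auto simp: indec_basis_def indec_classes_def)
  have "inj_on (hall_map n) (aplus_basis n)"
    by (rule inj_on_subset[OF hall_map_inj[OF n]]) (auto simp: basis Ebasis_aplus)
  moreover have "hall_map n ` aplus_basis n = indec_basis n"
  proof
    show "hall_map n ` aplus_basis n \<subseteq> indec_basis n"
      unfolding basis indec using hall_map_Ebasis[OF n] chain_class_indec[OF n] by blast
    show "indec_basis n \<subseteq> hall_map n ` aplus_basis n"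
    proof
      fix D assume "D \<in> indec_basis n"
      then obtain C where "C \<in> indec_classes n" "D = delta C" unfolding indec by blast
      then obtain m r s where v: "aplus_index n m r s" and "D = delta (chain_class n m r s)"
        using indec_classes_index[OF n] by metis
      then have "D = hall_map n (Ebasis r s m)" using hall_map_Ebasis[OF n v] by simp
      then show "D \<in> hall_map n ` aplus_basis n" unfolding basis using v by blast
    qed
  qed
  ultimately show ?thesis by (simp add: bij_betw_def)
qed

section \<open>Compatibility with the brackets\<close>

text \<open>Cutting the chain of degrees [d, d + l) at d + p: the top piece starts in
  degree (d + p) mod n and makes (d + l) div n - (d + p) div n further turns.\<close>
lemma div_mod_cut:
  assumes n: "n \<ge> 1" and PT: "(P::nat) \<le> T"
  shows "(P mod n + (T - P)) div n = T div n - P div n" "(P mod n + (T - P)) mod n = T mod n"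
proof -
  have "P div n \<le> T div n" using PT by (rule div_le_mono)
  then have "P div n * n \<le> T div n * n" by simp
  moreover have "(T div n - P div n) * n = T div n * n - P div n * n" by (simp add: diff_mult_distrib)
  moreover have "P = P div n * n + P mod n" "T = T div n * n + T mod n" by simp_all
  ultimately have E: "P mod n + (T - P) = (T div n - P div n) * n + T mod n" using PT by linarith
  have "T mod n < n" using n by simp
  then show "(P mod n + (T - P)) div n = T div n - P div n" "(P mod n + (T - P)) mod n = T mod n"
    unfolding E by simp_all
qed

lemma sum_blocks: "(\<Sum>a<M. \<Sum>k<(n::nat). f (a * n + k)) = (\<Sum>P<M * n. f P)"
proof -
  have "sum f {a * n..<a * n + n} = (\<Sum>k<n. f (a * n + k))" for a
    by (rule sum.reindex_bij_witness[where j = "\<lambda>P. P - a * n" and i = "\<lambda>k. a * n + k"]) auto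
  then have "(\<Sum>a<M. \<Sum>k<n. f (a * n + k)) = (\<Sum>a<M. sum f {a * n..<a * n + n})" by simp
  also have "\<dots> = sum f {..<M * n}" by (rule sum.nat_group)
  finally show ?thesis .
qed

lemma sum_reflect: "(\<Sum>a\<le>(m::nat). f (m - a) a) = (\<Sum>a\<le>m. f a (m - a))"
  by (rule sum.reindex_bij_witness[where i = "\<lambda>a. m - a" and j = "\<lambda>a. m - a"]) auto

text \<open>The summand u_a(d, k) v_{m-a}(k, s) of the (d, s) entry of the t^m
  coefficient of the loop product u v, indexed by P = a n + k.\<close>
definition loop_term ::
  "nat \<Rightarrow> (nat \<Rightarrow> nat \<Rightarrow> nat \<Rightarrow> complex) \<Rightarrow> (nat \<Rightarrow> nat \<Rightarrow> nat \<Rightarrow> complex) \<Rightarrow> nat \<Rightarrow> nat \<Rightarrow> nat \<Rightarrow> nat \<Rightarrow> complex"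
  where "loop_term n u v d m s P = u (P div n) d (P mod n) * v (m - P div n) (P mod n) s"

text \<open>A cut of the chain (d, l) at 0 < p < l contributes the loop term at
  P = d + p; the trivial cuts contribute nothing, as the zero class is not
  indecomposable.\<close>
lemma hall_map_cut:
  assumes n: "n \<ge> 1" and d: "d < n" and p: "p \<le> l"
  shows "hall_map n u (cls n (chain n d p)) * hall_map n v (cls n (chain n ((d + p) mod n) (l - p)))
     = (if 1 \<le> p \<and> p < l then loop_term n u v d ((d + l) div n) ((d + l) mod n) (d + p) else 0)"
proof (cases "1 \<le> p \<and> p < l")
  case True
  have dpn: "(d + p) mod n < n" using n by simp
  have lp: "1 \<le> l - p" using True by linarith
  have eq: "l - p = (d + l) - (d + p)" by simp
  have "hall_map n v (cls n (chain n ((d + p) mod n) (l - p)))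
     = v (((d + p) mod n + (l - p)) div n) ((d + p) mod n) (((d + p) mod n + (l - p)) mod n)"
    by (rule hall_map_chain[OF n dpn lp])
  also have "\<dots> = v ((d + l) div n - (d + p) div n) ((d + p) mod n) ((d + l) mod n)"
    unfolding eq using div_mod_cut[OF n, of "d + p" "d + l"] p by simp
  finally show ?thesis
    using hall_map_chain[OF n d] True by (simp add: loop_term_def)
next
  case False
  then have "p = 0 \<or> p = l" using p by auto
  then show ?thesis
    using hall_map_outside[OF chain0_not_indec[OF n]] False by auto
qed

text \<open>The loop terms vanish outside the window d < P < d + l: below it u would
  need a diagonal or lower-triangular entry in degree 0, above it v would.\<close>
lemma loop_term_window:
  assumes n: "n \<ge> 1" and d: "d < n" and u: "u \<in> aplus n" and v: "v \<in> aplus n"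
    and P: "P < Suc ((d + l) div n) * n" "P \<notin> {1 + d..<l + d}"
  shows "loop_term n u v d ((d + l) div n) ((d + l) mod n) P = 0"
proof -
  let ?m = "(d + l) div n" and ?s = "(d + l) mod n"
  have dl: "d + l = ?m * n + ?s" by simp
  consider "P \<le> d" | "d + l \<le> P" using P(2) by auto
  then show ?thesis
  proof cases
    case 1
    then have "P div n = 0" "P mod n = P" using d by auto
    moreover have "\<not> aplus_index n 0 d P" using 1 by (simp add: aplus_index_def)
    then have "u 0 d P = 0" using aplus_index_of_aplus[OF u] by blast
    ultimately show ?thesis by (simp add: loop_term_def)
  next
    case 2
    then have "?m * n \<le> P" using dl by linarith
    then have dv: "P div n = ?m" using P(1) by (intro div_nat_eqI) (auto simp: mult.commute)
    then have "P mod n = P - ?m * n" by (simp add: minus_div_mult_eq_mod[symmetric])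
    then have "?s \<le> P mod n" using 2 dl by linarith
    then have "\<not> aplus_index n 0 (P mod n) ?s" by (simp add: aplus_index_def)
    then have "v 0 (P mod n) ?s = 0" using aplus_index_of_aplus[OF v] by blast
    then show ?thesis using dv by (simp add: loop_term_def)
  qed
qed

lemma chain_convolution:
  assumes n: "n \<ge> 1" and d: "d < n" and l: "1 \<le> l" and u: "u \<in> aplus n" and v: "v \<in> aplus n"
  shows "(\<Sum>p\<le>l. hall_map n u (cls n (chain n d p)) * hall_map n v (cls n (chain n ((d + p) mod n) (l - p))))
     = (\<Sum>a\<le>(d + l) div n. \<Sum>k<n. u a d k * v ((d + l) div n - a) k ((d + l) mod n))"
proof -
  let ?m = "(d + l) div n" and ?s = "(d + l) mod n"
  let ?g = "loop_term n u v d ?m ?s"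
  have "(\<Sum>p\<le>l. hall_map n u (cls n (chain n d p)) * hall_map n v (cls n (chain n ((d + p) mod n) (l - p))))
     = (\<Sum>p\<in>{..l}. if 1 \<le> p \<and> p < l then ?g (d + p) else 0)"
    by (rule sum.cong[OF refl]) (simp add: hall_map_cut[OF n d])
  also have "\<dots> = (\<Sum>p\<in>{1..<l}. ?g (d + p))"
    by (simp add: sum.inter_filter[symmetric]) (rule sum.cong, auto)
  also have "\<dots> = (\<Sum>p\<in>{1..<l}. ?g (p + d))" by (simp add: add.commute)
  also have "\<dots> = (\<Sum>P\<in>{1 + d..<l + d}. ?g P)" by (rule sum.shift_bounds_nat_ivl[symmetric])
  also have "\<dots> = (\<Sum>P<Suc ?m * n. ?g P)"
  proof (rule sum.mono_neutral_left)
    have "?s < n" using n by simp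
    moreover have "d + l = ?m * n + ?s" by simp
    ultimately have "d + l < ?m * n + n" by linarith
    then have "d + l < Suc ?m * n" by simp
    then show "{1 + d..<l + d} \<subseteq> {..<Suc ?m * n}" by auto
  qed (use loop_term_window[OF n d u v] in auto)
  also have "\<dots> = (\<Sum>a\<le>?m. \<Sum>k<n. u a d k * v (?m - a) k ?s)"
    unfolding sum_blocks[symmetric] lessThan_Suc_atMost using n by (simp add: loop_term_def)
  finally show ?thesis .
qed

text \<open>On a
  chain class both sides are the difference of two convolutions; elsewhere the
  left side vanishes, and so does the right side by the symmetry of the
  product on decomposable classes.\<close>
lemma hall_map_bracket:
  assumes n: "n \<ge> 1" and x: "x \<in> aplus n" and y: "y \<in> aplus n"
  shows "hall_map n (abr n x y) = hbr n (hall_map n y) (hall_map n x)"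
proof
  fix C
  show "hall_map n (abr n x y) C = hbr n (hall_map n y) (hall_map n x) C"
  proof (cases "C \<in> indec_classes n")
    case True
    then obtain d l where dl: "d < n" "1 \<le> l" "C = cls n (chain n d l)"
      using indec_classes_chain[OF n] by blast
    let ?m = "(d + l) div n" and ?s = "(d + l) mod n"
    have "hall_map n (abr n x y) C
        = (\<Sum>a\<le>?m. \<Sum>k<n. x a d k * y (?m - a) k ?s) - (\<Sum>a\<le>?m. \<Sum>k<n. y a d k * x (?m - a) k ?s)"
      using hall_map_chain[OF n dl(1,2)] dl(3)
        sum_reflect[of "\<lambda>b a. \<Sum>k<n. y b d k * x a k ?s" ?m]
      by (simp add: abr_def sum_subtractf)
    also have "\<dots> = hbr n (hall_map n y) (hall_map n x) C"
      unfolding hbr_def dl(3) hmul_chain[OF n] chain_convolution[OF n dl(1,2) x y]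
        chain_convolution[OF n dl(1,2) y x] ..
    finally show ?thesis .
  next
    case False
    have "hmul n (hall_map n y) (hall_map n x) C = hmul n (hall_map n x) (hall_map n y) C"
    proof (cases "C \<in> isoclasses n")
      case True
      show ?thesis by (rule hmul_sym[OF True False]) (use hall_map_outside in blast)+
    qed (simp add: hmul_def)
    then show ?thesis using hall_map_outside[OF False] by (simp add: hbr_def)
  qed
qed

theorem mainTheorem16:
  fixes n :: nat
  assumes "n \<ge> 2"
  shows "\<exists>\<phi>. bij_betw \<phi> (aplus n) (nQ n) \<and>
     (\<forall>x\<in>aplus n. \<forall>y\<in>aplus n.
        \<phi> (\<lambda>m r s. x m r s + y m r s) = (\<lambda>C. \<phi> x C + \<phi> y C)) \<and>
     (\<forall>x\<in>aplus n. \<forall>c::complex. \<phi> (\<lambda>m r s. c * x m r s) = (\<lambda>C. c * \<phi> x C)) \<and>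
     (\<forall>x\<in>aplus n. \<forall>y\<in>aplus n. \<phi> (abr n x y) = hbr n (\<phi> y) (\<phi> x)) \<and>
     bij_betw \<phi> (aplus_basis n) (indec_basis n)"
proof -
  have n: "n \<ge> 1" using assms by simp
  show ?thesis
  proof (intro exI[of _ "hall_map n"] conjI ballI allI)
    show "bij_betw (hall_map n) (aplus n) (nQ n)" by (rule hall_map_bij[OF n])
    show "bij_betw (hall_map n) (aplus_basis n) (indec_basis n)" by (rule hall_map_basis[OF n])
    show "hall_map n (abr n x y) = hbr n (hall_map n y) (hall_map n x)"
      if "x \<in> aplus n" "y \<in> aplus n" for x y
      using hall_map_bracket[OF n that] .
  qed (simp_all only: hall_map_add hall_map_smult)
qed

end
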